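(* Consider $\min_{x\in X}f(x)$, $f(x)=\mathbb{E}[F(x,\xi)]$, with $F:\mathcal{D}\times\Omega\to\mathbb{R}$, $\mathcal{D}\subseteq\mathbb{R}^n$ open, $X\subset\mathcal{D}$ nonempty closed convex, $F(\cdot,\xi)$ convex on $\mathcal{D}$ for all $\xi$, $\mathbb{E}[F(x,\xi)]$ finite on $\mathcal{D}$. Let $f$ be differentiable over $X$ with $L$-Lipschitz gradient and strongly convex with constant $\eta>0$, where $L>\eta$; let $X$ be compact, $D=\max_{x,y\in X}\|x-y\|$, and assume $\mathbb{E}[\|w_k\|^2\mid\mathcal{F}_k]\le\nu^2$ a.s. for all $k$. Let $\{x_k\}$ be generated by the iteration with the cascading steplength scheme with $\gamma_0\in(0,\frac2L)$ and $\theta\in(0,1)$. Then $\{x_k\}$ converges almost surely to the unique optimal solution.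
   Context: Iteration: $x_{k+1}=\Pi_X(x_k-\gamma_k(\nabla f(x_k)+w_k))$, $w_k=\nabla_xF(x_k,\xi_k)-\nabla f(x_k)$, $x_0\in X$ random, $\mathcal{F}_k=\{x_0,\xi_0,\dots,\xi_{k-1}\}$, $\mathbb{E}[w_k\mid\mathcal{F}_k]=0$. Cascading steplength scheme: $q(\gamma)=1-\eta\gamma(2-L\gamma)$; $\gamma_t=\theta^t\gamma_0$, $q_t=q(\gamma_t)$; $K_0=\max\{k\in\mathbb{Z}_+: q_0^kD^2>\frac{\gamma_0^2\nu^2}{1-q_0}\}$ (where $\gamma_0$ is chosen so that $D^2>\frac{\gamma_0^2\nu^2}{1-q_0}$), and for $t\ge1$, $K_t=\max\{k\in\mathbb{Z}_+: q_t^k\,2^t\big(\prod_{j=0}^{t-1}q_j^{K_j}\big)D^2>\frac{\gamma_t^2\nu^2}{1-q_t}\}$; with $\bar K_{-1}=0$, $\bar K_t=\sum_{j=0}^tK_j$, the stepsize is $\gamma_k=\gamma_t$ for $k=\bar K_{t-1}+1,\dots,\bar K_t$. *)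

theory Defs
  imports "HOL-Probability.Probability"
begin

definition strongly_convex_on :: "'a::real_normed_vector set \<Rightarrow> real \<Rightarrow> ('a \<Rightarrow> real) \<Rightarrow> bool" where
  "strongly_convex_on S eta f \<longleftrightarrow>
     (\<forall>x\<in>S. \<forall>y\<in>S. \<forall>t::real. 0 \<le> t \<and> t \<le> 1 \<longrightarrow>
        f ((1 - t) *\<^sub>R x + t *\<^sub>R y) \<le> (1 - t) * f x + t * f y - eta / 2 * t * (1 - t) * (norm (x - y))\<^sup>2)"

definition nat_filtration :: "'a measure \<Rightarrow> 'b measure \<Rightarrow> ('a \<Rightarrow> 'v::topological_space) \<Rightarrow> (nat \<Rightarrow> 'a \<Rightarrow> 'b) \<Rightarrow> nat \<Rightarrow> 'a measure" where
  "nat_filtration M N x0 xi k =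
     sigma (space M)
       ({x0 -` A \<inter> space M | A. A \<in> sets borel} \<union>
        {xi j -` B \<inter> space M | j B. j < k \<and> B \<in> sets N})"

definition qfun :: "real \<Rightarrow> real \<Rightarrow> real \<Rightarrow> real" where
  "qfun eta L g = 1 - eta * g * (2 - L * g)"

text \<open>K_t given gamma_t, the product P = prod_{j<t} q_j^{K_j} (empty product 1 for t = 0)
  and t:  max { k. q_t^k 2^t P D^2 > gamma_t^2 nu^2 / (1 - q_t) }.\<close>
definition cascK_of :: "real \<Rightarrow> real \<Rightarrow> real \<Rightarrow> real \<Rightarrow> real \<Rightarrow> real \<Rightarrow> nat \<Rightarrow> nat" where
  "cascK_of eta L nu D g P t =
     Max {k::nat. (qfun eta L g) ^ k * 2 ^ t * P * D\<^sup>2 > g\<^sup>2 * nu\<^sup>2 / (1 - qfun eta L g)}"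

fun casc_P :: "real \<Rightarrow> real \<Rightarrow> real \<Rightarrow> real \<Rightarrow> real \<Rightarrow> real \<Rightarrow> nat \<Rightarrow> real" where
  "casc_P eta L g0 theta nu D 0 = 1"
| "casc_P eta L g0 theta nu D (Suc t) =
     casc_P eta L g0 theta nu D t *
     (qfun eta L (theta ^ t * g0)) ^ cascK_of eta L nu D (theta ^ t * g0) (casc_P eta L g0 theta nu D t) t"

definition casc_K :: "real \<Rightarrow> real \<Rightarrow> real \<Rightarrow> real \<Rightarrow> real \<Rightarrow> real \<Rightarrow> nat \<Rightarrow> nat" where
  "casc_K eta L g0 theta nu D t = cascK_of eta L nu D (theta ^ t * g0) (casc_P eta L g0 theta nu D t) t"

definition casc_Kbar :: "real \<Rightarrow> real \<Rightarrow> real \<Rightarrow> real \<Rightarrow> real \<Rightarrow> real \<Rightarrow> nat \<Rightarrow> nat" where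
  "casc_Kbar eta L g0 theta nu D t = (\<Sum>j\<le>t. casc_K eta L g0 theta nu D j)"

text \<open>Stepsize gamma_k = gamma_t for Kbar_(t-1) < k \<le> Kbar_t (Kbar_(-1) = 0); k = 0 uses gamma_0.
  Equivalently, t is the least stage index with k \<le> Kbar_t.\<close>
definition casc_step :: "real \<Rightarrow> real \<Rightarrow> real \<Rightarrow> real \<Rightarrow> real \<Rightarrow> real \<Rightarrow> nat \<Rightarrow> real" where
  "casc_step eta L g0 theta nu D k =
     theta ^ (LEAST t. k \<le> casc_Kbar eta L g0 theta nu D t) * g0"

end

theory Submission
  imports Defs
begin

text \<open>The cascading scheme keeps the step \<open>\<gamma>\<^sub>t = \<theta>\<^sup>t \<gamma>\<^sub>0\<close> for \<open>K\<^sub>t\<close> iterations, where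
  \<open>K\<^sub>t\<close> is chosen so that the contracted error bound just stays above the level
  \<open>\<gamma>\<^sub>t\<^sup>2 \<nu>\<^sup>2 / (1 - q\<^sub>t)\<close> reachable with that step. Since \<open>1 - q\<^sub>t\<close> is proportional to \<open>\<gamma>\<^sub>t\<close>, this
  pins \<open>K\<^sub>t \<gamma>\<^sub>t\<close> between two positive constants, so the steps satisfy the Robbins--Monro
  conditions \<open>\<Sum> \<gamma>\<^sub>k = \<infinity>\<close> and \<open>\<Sum> \<gamma>\<^sub>k\<^sup>2 < \<infinity>\<close>.

  For such steps, nonexpansiveness of the projection and strong monotonicity of the gradient give
  \<open>V\<^sub>k\<^sub>+\<^sub>1 \<le> (1 - 2 \<eta> \<gamma>\<^sub>k) V\<^sub>k + \<gamma>\<^sub>k\<^sup>2 (L\<^sup>2 D\<^sup>2 + \<parallel>w\<^sub>k\<parallel>\<^sup>2) - 2 \<gamma>\<^sub>k \<langle>w\<^sub>k, u\<^sub>k\<rangle>\<close> for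
  \<open>V\<^sub>k = \<parallel>x\<^sub>k - x\<^sup>*\<parallel>\<^sup>2\<close>, with \<open>u\<^sub>k\<close> bounded and \<open>F\<^sub>k\<close>-measurable. The last terms are square-summable
  martingale differences, whose partial sums converge almost surely by Kolmogorov's maximal
  inequality; on each such path a deterministic Robbins--Siegmund argument forces \<open>V\<^sub>k \<rightarrow> 0\<close>.\<close>

section \<open>The cascading steplength scheme satisfies the Robbins--Monro conditions\<close>

lemma one_minus_pow_mult_le_1:
  fixes a :: real
  assumes "0 \<le> a" "a \<le> 1"
  shows "(1 - a) ^ n * (1 + real n * a) \<le> 1"
proof -
  have "(1 - a) ^ n * (1 + real n * a) \<le> (1 - a) ^ n * (1 + a) ^ n"
    using Bernoulli_inequality[of a n] assms by (intro mult_left_mono) auto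
  also have "\<dots> = (1 - a * a) ^ n" by (simp add: power_mult_distrib[symmetric] algebra_simps)
  also have "\<dots> \<le> 1" using assms by (intro power_le_one) (auto simp: mult_le_one)
  finally show ?thesis .
qed

locale cascade =
  fixes eta L g0 theta nu D :: real
  assumes eta_pos: "0 < eta" and eta_less_L: "eta < L"
    and g0_pos: "0 < g0" and g0_less: "g0 < 2 / L"
    and theta_pos: "0 < theta" and theta_less_1: "theta < 1" and nu_pos: "0 < nu"
    and diameter_large: "D\<^sup>2 > g0\<^sup>2 * nu\<^sup>2 / (1 - qfun eta L g0)"
begin

abbreviation q :: "real \<Rightarrow> real" where "q g \<equiv> qfun eta L g"

definition stage_step :: "nat \<Rightarrow> real" where "stage_step t = theta ^ t * g0"

text \<open>The error level \<open>g\<^sup>2 \<nu>\<^sup>2 / (1 - q g)\<close> that a constant step \<open>g\<close> can reach, and the bound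
  \<open>2\<^sup>t (\<Prod>\<^sub>j\<^sub><\<^sub>t q\<^sub>j\<^bsup>K\<^sub>j\<^esup>) D\<^sup>2\<close> on the error at the start of stage \<open>t\<close>; \<open>K\<^sub>t\<close> is the last iteration
  count for which the contracted bound stays above the error level.\<close>
definition err_level :: "real \<Rightarrow> real" where "err_level g = g\<^sup>2 * nu\<^sup>2 / (1 - q g)"

definition stage_bound :: "nat \<Rightarrow> real" where
  "stage_bound t = 2 ^ t * casc_P eta L g0 theta nu D t * D\<^sup>2"

definition stage_counts :: "nat \<Rightarrow> nat set" where
  "stage_counts t = {k. q (stage_step t) ^ k * stage_bound t > err_level (stage_step t)}"

abbreviation K :: "nat \<Rightarrow> nat" where "K t \<equiv> casc_K eta L g0 theta nu D t"

lemma L_pos: "0 < L"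
  using eta_pos eta_less_L by simp

lemma L_g0_less_2: "L * g0 < 2"
  using g0_less L_pos by (simp add: pos_less_divide_eq mult.commute)

lemma qfun_bounds:
  assumes "0 < g" "g \<le> g0"
  shows "0 < q g" "q g < 1" "1 - q g = eta * g * (2 - L * g)"
    "1 - 2 * eta * g \<le> q g" "eta * g * (2 - L * g0) \<le> 1 - q g" "1 - eta / L \<le> q g"
proof -
  have Lg: "L * g < 2" using assms L_g0_less_2 L_pos by (smt (verit) mult_left_mono)
  have "L * (g * (2 - L * g)) \<le> 1"
    using zero_le_power2[of "L * g - 1"] by (simp add: power2_eq_square algebra_simps)
  hence "g * (2 - L * g) \<le> 1 / L" using L_pos by (simp add: field_simps mult.commute)
  hence am_gm: "eta * (g * (2 - L * g)) \<le> eta / L" using mult_left_mono[of _ _ eta] eta_pos by fastforce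
  also have "\<dots> < 1" using eta_pos eta_less_L by simp
  finally have "eta * (g * (2 - L * g)) < 1" .
  then show "0 < q g" by (simp add: qfun_def mult.assoc)
  show "1 - q g = eta * g * (2 - L * g)" by (simp add: qfun_def)
  show "q g < 1" using eta_pos assms Lg by (simp add: qfun_def)
  show "1 - 2 * eta * g \<le> q g"
    using eta_pos assms L_pos by (simp add: qfun_def algebra_simps)
  have "eta * g * (2 - L * g0) \<le> eta * g * (2 - L * g)"
    using eta_pos assms L_pos by (intro mult_left_mono) auto
  then show "eta * g * (2 - L * g0) \<le> 1 - q g" by (simp add: qfun_def)
  show "1 - eta / L \<le> q g" using am_gm by (simp add: qfun_def mult.assoc)
qed

lemma stage_step_pos: "0 < stage_step t"
  using theta_pos g0_pos by (simp add: stage_step_def)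

lemma stage_step_le: "stage_step t \<le> g0"
  using theta_pos theta_less_1 g0_pos
  by (simp add: stage_step_def mult_left_le_one_le power_le_one)

lemma stage_step_Suc: "stage_step (Suc t) = theta * stage_step t"
  by (simp add: stage_step_def)

lemmas qfun_stage = qfun_bounds[OF stage_step_pos stage_step_le]

lemma L_stage_step_less_2: "L * stage_step t < 2"
  using stage_step_le[of t] L_g0_less_2 L_pos by (smt (verit) mult_left_mono)

lemma err_level_eq: "err_level (stage_step t) = stage_step t * nu\<^sup>2 / (eta * (2 - L * stage_step t))"
  using stage_step_pos[of t] unfolding err_level_def qfun_stage(3)
  by (simp add: power2_eq_square)

lemma err_level_pos: "0 < err_level (stage_step t)"
  using qfun_stage(1,2) nu_pos stage_step_pos[of t] by (simp add: err_level_def)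

lemma err_level_Suc:
  "err_level (stage_step (Suc t)) =
     err_level (stage_step t) * (theta * (2 - L * stage_step t) / (2 - L * stage_step (Suc t)))"
proof -
  have ratio: "theta * g * c / (e * b) = g * c / (e * a) * (theta * a / b)"
    if "a \<noteq> 0" "b \<noteq> 0" "e \<noteq> 0" for a b e g c :: real
    using that by (simp add: field_simps)
  show ?thesis
    using L_stage_step_less_2[of t] L_stage_step_less_2[of "Suc t"] eta_pos
    unfolding err_level_eq unfolding stage_step_Suc by (intro ratio) auto
qed

lemma err_level_Suc_le: "err_level (stage_step (Suc t)) \<le> err_level (stage_step t)"
proof -
  have "stage_step (Suc t) \<le> stage_step t"
    using stage_step_Suc[of t] theta_less_1 stage_step_pos[of t] by simp
  hence "theta * (2 - L * stage_step t) \<le> 2 - L * stage_step (Suc t)"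
    using L_pos theta_pos theta_less_1 L_stage_step_less_2[of t]
    by (smt (verit) mult_le_cancel_left_pos mult_left_le_one_le)
  hence "theta * (2 - L * stage_step t) / (2 - L * stage_step (Suc t)) \<le> 1"
    using L_stage_step_less_2[of "Suc t"] by simp
  hence "err_level (stage_step t) * (theta * (2 - L * stage_step t) / (2 - L * stage_step (Suc t)))
      \<le> err_level (stage_step t) * 1"
    using err_level_pos[of t] by (intro mult_left_mono) auto
  thus ?thesis unfolding err_level_Suc[of t] by simp
qed

lemma err_level_Suc_ge:
  "err_level (stage_step t) * (theta * (2 - L * g0) / 2) \<le> err_level (stage_step (Suc t))"
proof -
  have "theta * (2 - L * g0) / 2 \<le> theta * (2 - L * stage_step t) / 2"
    using stage_step_le[of t] L_pos theta_pos by (simp add: mult_left_mono)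
  also have "\<dots> \<le> theta * (2 - L * stage_step t) / (2 - L * stage_step (Suc t))"
    using L_stage_step_less_2[of t] L_stage_step_less_2[of "Suc t"] stage_step_pos[of "Suc t"]
      theta_pos L_pos by (intro divide_left_mono) auto
  finally show ?thesis
    unfolding err_level_Suc[of t] using err_level_pos[of t] by (intro mult_left_mono) auto
qed

lemma K_eq_Max: "K t = Max (stage_counts t)"
  by (simp add: casc_K_def cascK_of_def stage_counts_def stage_bound_def err_level_def
      stage_step_def mult.assoc)

lemma stage_bound_Suc: "stage_bound (Suc t) = 2 * q (stage_step t) ^ K t * stage_bound t"
  by (simp add: stage_bound_def casc_P.simps(2) casc_K_def stage_step_def)

lemma finite_stage_counts: "finite (stage_counts t)"
proof (cases "0 < stage_bound t")
  case True
  obtain n where n: "q (stage_step t) ^ n < err_level (stage_step t) / stage_bound t"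
    using real_arch_pow_inv[OF _ qfun_stage(2)] True err_level_pos[of t] by (meson divide_pos_pos)
  have "stage_counts t \<subseteq> {..<n}"
  proof
    fix k assume "k \<in> stage_counts t"
    hence "err_level (stage_step t) / stage_bound t < q (stage_step t) ^ k"
      using True by (simp add: stage_counts_def pos_divide_less_eq)
    hence "q (stage_step t) ^ n < q (stage_step t) ^ k" using n by simp
    thus "k \<in> {..<n}" using qfun_stage(1,2) by (simp add: power_strict_decreasing_iff)
  qed
  thus ?thesis using finite_subset by blast
next
  case False
  hence "stage_counts t = {}"
    using qfun_stage err_level_pos[of t] unfolding stage_counts_def
    by (auto simp: not_less) (smt (verit) mult_nonneg_nonpos zero_le_power)
  thus ?thesis by simp
qed

lemma K_mem_stage_counts:
  assumes "0 \<in> stage_counts t" shows "K t \<in> stage_counts t"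
  unfolding K_eq_Max using assms finite_stage_counts by (intro Max_in) auto

text \<open>The scheme is well defined: every stage starts above its error level, so \<open>K\<^sub>t\<close> is the
  maximum of a nonempty finite set.\<close>
lemma stage_bound_above_err_level: "err_level (stage_step t) < stage_bound t"
proof (induction t)
  case 0
  show ?case using diameter_large by (simp add: stage_bound_def err_level_def stage_step_def)
next
  case (Suc t)
  hence "K t \<in> stage_counts t" by (intro K_mem_stage_counts) (simp add: stage_counts_def)
  hence "err_level (stage_step t) < q (stage_step t) ^ K t * stage_bound t"
    by (simp add: stage_counts_def)
  thus ?case
    using err_level_Suc_le[of t] err_level_pos[of t] unfolding stage_bound_Suc by simp
qed

lemma K_above: "err_level (stage_step t) < q (stage_step t) ^ K t * stage_bound t"
  using K_mem_stage_counts[of t] stage_bound_above_err_level[of t]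
  by (simp add: stage_counts_def)

lemma K_Suc_below: "q (stage_step t) ^ Suc (K t) * stage_bound t \<le> err_level (stage_step t)"
proof -
  have "Suc (K t) \<notin> stage_counts t"
    using Max_ge[OF finite_stage_counts, of "Suc (K t)" t] by (auto simp: K_eq_Max)
  thus ?thesis by (simp add: stage_counts_def not_less)
qed

text \<open>Stage \<open>t + 1\<close> starts from a bound between \<open>2 err(\<gamma>\<^sub>t\<^sub>+\<^sub>1)\<close> and a constant multiple of
  \<open>err(\<gamma>\<^sub>t\<^sub>+\<^sub>1)\<close>, and ends once \<open>q\<^sup>K\<close> has brought it down to \<open>err(\<gamma>\<^sub>t\<^sub>+\<^sub>1)\<close>; as
  \<open>1 - q(\<gamma>)\<close> is proportional to \<open>\<gamma>\<close>, Bernoulli's inequality bounds \<open>K\<^sub>t\<^sub>+\<^sub>1 \<gamma>\<^sub>t\<^sub>+\<^sub>1\<close> from both sides.\<close>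

lemma K_Suc_lower: "1 / (4 * eta) < (real (K (Suc t)) + 1) * stage_step (Suc t)"
proof -
  let ?g = "stage_step (Suc t)" and ?n = "Suc (K (Suc t))"
  have "2 * err_level ?g < stage_bound (Suc t)"
    using K_above[of t] err_level_Suc_le[of t] unfolding stage_bound_Suc by simp
  hence "q ?g ^ ?n * (2 * err_level ?g) < err_level ?g"
    using K_Suc_below[of "Suc t"] qfun_stage(1)[of "Suc t"]
    by (smt (verit) mult_strict_left_mono zero_less_power)
  hence "q ?g ^ ?n < 1 / 2" using err_level_pos[of "Suc t"] by (simp add: field_simps)
  moreover have "1 + real ?n * (q ?g - 1) \<le> q ?g ^ ?n"
    using Bernoulli_inequality[of "q ?g - 1" ?n] qfun_stage(1)[of "Suc t"] by simp
  ultimately have "1 / 2 < real ?n * (1 - q ?g)" by (simp add: algebra_simps)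
  also have "\<dots> \<le> real ?n * (2 * eta * ?g)"
    using qfun_stage(4)[of "Suc t"] by (intro mult_left_mono) auto
  finally show ?thesis using eta_pos by (simp add: field_simps)
qed

lemma K_Suc_pow_lower:
  "theta * (2 - L * g0) * (1 - eta / L) / 4 < q (stage_step (Suc t)) ^ K (Suc t)"
proof -
  let ?E = "err_level (stage_step t)" and ?E' = "err_level (stage_step (Suc t))"
    and ?r = "q (stage_step t)" and ?Q = "q (stage_step (Suc t)) ^ K (Suc t)"
  have "?E * (theta * (2 - L * g0) * (1 - eta / L) / 4) = ?E * (theta * (2 - L * g0) / 2) * (1 - eta / L) / 2"
    by simp
  also have "\<dots> \<le> ?E' * ?r / 2"
    using err_level_Suc_ge[of t] qfun_stage(6)[of t] err_level_pos[of t] err_level_pos[of "Suc t"]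
      theta_pos L_g0_less_2 eta_less_L L_pos by (intro divide_right_mono mult_mono) auto
  also have "\<dots> < ?Q * stage_bound (Suc t) * ?r / 2"
    using K_above[of "Suc t"] qfun_stage(1)[of t] by simp
  also have "\<dots> \<le> ?E * ?Q"
    using K_Suc_below[of t] qfun_stage(1)[of "Suc t"] unfolding stage_bound_Suc
    by (simp add: algebra_simps mult_left_mono)
  finally show ?thesis using err_level_pos[of t] by simp
qed

lemma K_Suc_upper: "\<exists>C>0. \<forall>t. real (K (Suc t)) * stage_step (Suc t) \<le> C"
proof -
  define beta where "beta = theta * (2 - L * g0) * (1 - eta / L) / 4"
  have beta_pos: "0 < beta"
    using theta_pos L_g0_less_2 eta_less_L L_pos by (simp add: beta_def)
  have "real (K (Suc t)) * stage_step (Suc t) \<le> 1 / (beta * eta * (2 - L * g0))" for t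
  proof -
    let ?g = "stage_step (Suc t)" and ?k = "K (Suc t)"
    let ?a = "1 - q ?g"
    have "q ?g ^ ?k * (1 + real ?k * ?a) \<le> 1"
      using one_minus_pow_mult_le_1[of ?a ?k] qfun_stage(1,2)[of "Suc t"] by simp
    hence "beta * (1 + real ?k * ?a) < 1"
      using K_Suc_pow_lower[of t] qfun_stage(2)[of "Suc t"] unfolding beta_def[symmetric]
      by (smt (verit) mult_strict_right_mono of_nat_0_le_iff zero_le_mult_iff)
    moreover have "beta * (real ?k * (eta * ?g * (2 - L * g0))) \<le> beta * (real ?k * ?a)"
      using qfun_stage(5)[of "Suc t"] beta_pos by (intro mult_left_mono) auto
    ultimately have "real ?k * ?g * (beta * eta * (2 - L * g0)) < 1"
      using beta_pos by (simp add: algebra_simps)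
    thus ?thesis using beta_pos eta_pos L_g0_less_2 by (simp add: field_simps)
  qed
  moreover have "0 < 1 / (beta * eta * (2 - L * g0))"
    using beta_pos eta_pos L_g0_less_2 by simp
  ultimately show ?thesis by blast
qed

abbreviation Kbar :: "nat \<Rightarrow> nat" where "Kbar t \<equiv> casc_Kbar eta L g0 theta nu D t"

definition stage_of :: "nat \<Rightarrow> nat" where "stage_of k = (LEAST t. k \<le> Kbar t)"

lemma casc_step_eq: "casc_step eta L g0 theta nu D k = stage_step (stage_of k)"
  by (simp add: casc_step_def stage_of_def stage_step_def)

lemma Kbar_Suc: "Kbar (Suc t) = Kbar t + K (Suc t)"
  by (simp add: casc_Kbar_def)

lemma Kbar_mono: "s \<le> t \<Longrightarrow> Kbar s \<le> Kbar t"
  unfolding casc_Kbar_def by (rule sum_mono2) auto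

lemma K_unbounded: "\<exists>t. n \<le> K t"
proof -
  define c where "c = 1 / (4 * eta * (real n + 1))"
  have c_pos: "0 < c" using eta_pos by (simp add: c_def)
  then obtain t where "theta ^ t < c / g0"
    using real_arch_pow_inv[OF _ theta_less_1] g0_pos by (meson divide_pos_pos)
  hence "stage_step t < c" using g0_pos by (simp add: stage_step_def pos_less_divide_eq)
  hence step: "stage_step (Suc t) < c"
    using stage_step_Suc[of t] stage_step_pos[of t] theta_less_1 theta_pos
    by (smt (verit) mult_left_le_one_le)
  have "1 / (4 * eta) < (real (K (Suc t)) + 1) * c"
    using K_Suc_lower[of t] step by (smt (verit) mult_strict_left_mono of_nat_0_le_iff)
  also have "(real (K (Suc t)) + 1) * c = (real (K (Suc t)) + 1) / (real n + 1) * (1 / (4 * eta))"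
    by (simp add: c_def)
  finally have "1 * (1 / (4 * eta)) < (real (K (Suc t)) + 1) / (real n + 1) * (1 / (4 * eta))"
    by (simp only: mult_1)
  moreover have "0 < 1 / (4 * eta)" using eta_pos by simp
  ultimately have "1 < (real (K (Suc t)) + 1) / (real n + 1)"
    by (simp only: mult_less_cancel_right_pos)
  hence "real n + 1 < real (K (Suc t)) + 1" by (simp add: less_divide_eq_1_pos)
  thus ?thesis using less_imp_le by auto
qed

lemma Kbar_unbounded: "\<exists>t. k \<le> Kbar t"
proof -
  obtain t where "k \<le> K t" using K_unbounded by blast
  moreover have "K t \<le> Kbar t" unfolding casc_Kbar_def by (rule member_le_sum) auto
  ultimately show ?thesis by (meson order_trans)
qed

lemma stage_of_in_stage:
  assumes "Kbar T < k" "k \<le> Kbar (Suc T)" shows "stage_of k = Suc T"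
  unfolding stage_of_def
proof (rule Least_equality)
  fix t assume "k \<le> Kbar t"
  thus "Suc T \<le> t" using assms(1) Kbar_mono[of t T] by (meson leD not_less_eq_eq order_trans)
qed (use assms in simp)

lemma sum_over_stages:
  "(\<Sum>k\<le>Kbar T. h (stage_of k)) = h 0 + (\<Sum>t\<le>T. real (K t) * h t)"
proof (induction T)
  case 0
  have "stage_of k = 0" if "k \<le> Kbar 0" for k
    unfolding stage_of_def using that by (intro Least_equality) auto
  thus ?case by (simp add: casc_Kbar_def algebra_simps)
next
  case (Suc T)
  have split: "{..Kbar (Suc T)} = {..Kbar T} \<union> {Kbar T<..Kbar (Suc T)}"
    using Kbar_mono[of T "Suc T"] by auto
  have "(\<Sum>k\<le>Kbar (Suc T). h (stage_of k))
      = (\<Sum>k\<le>Kbar T. h (stage_of k)) + (\<Sum>k\<in>{Kbar T<..Kbar (Suc T)}. h (stage_of k))"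
    unfolding split by (rule sum.union_disjoint) auto
  also have "(\<Sum>k\<in>{Kbar T<..Kbar (Suc T)}. h (stage_of k)) = (\<Sum>k\<in>{Kbar T<..Kbar (Suc T)}. h (Suc T))"
    by (rule sum.cong) (auto simp: stage_of_in_stage)
  also have "\<dots> = real (K (Suc T)) * h (Suc T)" by (simp add: Kbar_Suc)
  finally show ?case using Suc by simp
qed

lemma sum_stage_step_le: "(\<Sum>t\<le>T. stage_step t) \<le> g0 / (1 - theta)"
proof -
  have "(\<Sum>t\<le>T. stage_step t) = g0 * (\<Sum>t<Suc T. theta ^ t)"
    by (simp add: stage_step_def sum_distrib_left lessThan_Suc_atMost mult.commute)
  also have "\<dots> = g0 * ((1 - theta ^ Suc T) / (1 - theta))"
    using theta_less_1 by (subst sum_gp_strict) auto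
  also have "\<dots> \<le> g0 * (1 / (1 - theta))"
    using theta_pos theta_less_1 g0_pos by (intro mult_left_mono divide_right_mono) auto
  finally show ?thesis by simp
qed

lemma casc_step_pos: "0 < casc_step eta L g0 theta nu D k"
  unfolding casc_step_eq by (rule stage_step_pos)

lemma casc_step_sq_summable: "summable (\<lambda>k. (casc_step eta L g0 theta nu D k)\<^sup>2)"
proof -
  obtain C where C: "0 < C" "\<And>t. real (K (Suc t)) * stage_step (Suc t) \<le> C"
    using K_Suc_upper by blast
  show ?thesis
  proof (rule summableI_nonneg_bounded)
    fix n
    obtain T where T: "n \<le> Kbar T" using Kbar_unbounded by blast
    have "(\<Sum>i<n. (casc_step eta L g0 theta nu D i)\<^sup>2) \<le> (\<Sum>k\<le>Kbar T. (stage_step (stage_of k))\<^sup>2)"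
      unfolding casc_step_eq using T by (intro sum_mono2) auto
    also have "\<dots> = (stage_step 0)\<^sup>2 + (\<Sum>t\<le>T. real (K t) * (stage_step t)\<^sup>2)"
      by (rule sum_over_stages)
    also have "(\<Sum>t\<le>T. real (K t) * (stage_step t)\<^sup>2)
        \<le> (\<Sum>t\<le>T. (if t = 0 then real (K 0) * g0\<^sup>2 else 0) + C * stage_step t)"
    proof (rule sum_mono)
      fix t
      show "real (K t) * (stage_step t)\<^sup>2 \<le> (if t = 0 then real (K 0) * g0\<^sup>2 else 0) + C * stage_step t"
      proof (cases t)
        case 0 thus ?thesis using C stage_step_pos[of 0] by (simp add: stage_step_def)
      next
        case (Suc s)
        have "real (K t) * (stage_step t)\<^sup>2 = (real (K (Suc s)) * stage_step (Suc s)) * stage_step t"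
          by (simp add: Suc power2_eq_square)
        also have "\<dots> \<le> C * stage_step t" using C(2)[of s] stage_step_pos[of t] by simp
        finally show ?thesis using Suc by simp
      qed
    qed
    also have "\<dots> \<le> real (K 0) * g0\<^sup>2 + C * (g0 / (1 - theta))"
      using mult_left_mono[OF sum_stage_step_le[of T], of C] C(1)
      by (simp add: sum.distrib sum_distrib_left[symmetric])
    finally show "(\<Sum>i<n. (casc_step eta L g0 theta nu D i)\<^sup>2)
        \<le> (stage_step 0)\<^sup>2 + (real (K 0) * g0\<^sup>2 + C * (g0 / (1 - theta)))"
      by simp
  qed simp
qed

lemma casc_step_not_summable: "\<not> summable (\<lambda>k. casc_step eta L g0 theta nu D k)"
proof
  assume summable: "summable (\<lambda>k. casc_step eta L g0 theta nu D k)"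
  define s where "s = (\<Sum>k. casc_step eta L g0 theta nu D k)"
  obtain T :: nat where T: "s + g0 / (1 - theta) < real T / (4 * eta)"
    using reals_Archimedean2[of "4 * eta * (s + g0 / (1 - theta))"] eta_pos
    by (auto simp: pos_less_divide_eq mult.commute)
  have "(\<Sum>t\<le>T. 1 / (4 * eta) - stage_step t)
      \<le> (\<Sum>t\<le>T. real (K t) * stage_step t + (if t = 0 then 1 / (4 * eta) else 0))"
  proof (rule sum_mono)
    fix t
    show "1 / (4 * eta) - stage_step t \<le> real (K t) * stage_step t + (if t = 0 then 1 / (4 * eta) else 0)"
      using K_Suc_lower[of "t - 1"] stage_step_pos[of t]
      by (cases t) (auto simp: algebra_simps)
  qed
  hence "real T / (4 * eta) - g0 / (1 - theta) \<le> (\<Sum>t\<le>T. real (K t) * stage_step t)"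
    using sum_stage_step_le[of T] by (simp add: sum_subtractf sum.distrib add_divide_distrib)
  also have "\<dots> < (\<Sum>k\<le>Kbar T. casc_step eta L g0 theta nu D k)"
    unfolding casc_step_eq sum_over_stages using stage_step_pos[of 0] by simp
  also have "\<dots> \<le> s"
    unfolding s_def using summable casc_step_pos by (intro sum_le_suminf) (auto intro: less_imp_le)
  finally show False using T by simp
qed

end

section \<open>A deterministic Robbins--Siegmund lemma\<close>

text \<open>\<open>V\<^sub>k + S\<^sub>k - \<Sum>\<^sub>j\<^sub><\<^sub>k b\<^sub>j\<close> is decreasing and bounded below.\<close>
lemma perturbed_descent_convergent:
  fixes V g b S :: "nat \<Rightarrow> real" and c :: real
  assumes V_nonneg: "\<And>k. 0 \<le> V k" and g_nonneg: "\<And>k. 0 \<le> g k" and c_pos: "0 < c"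
    and b_summable: "summable b" and b_nonneg: "\<And>k. 0 \<le> b k" and S_convergent: "convergent S"
    and descent: "\<And>k. V (Suc k) \<le> V k - c * g k * V k + b k - (S (Suc k) - S k)"
  shows "convergent V" and "summable (\<lambda>k. c * g k * V k)"
proof -
  define W where "W k = V k + S k - (\<Sum>j<k. b j)" for k
  have W_Suc: "W (Suc k) \<le> W k - c * g k * V k" for k
    using descent[of k] by (simp add: W_def)
  have gain_nonneg: "0 \<le> c * g k * V k" for k using c_pos g_nonneg V_nonneg by simp
  obtain B where B: "\<And>k. norm (S k) \<le> B"
    using convergent_imp_Bseq[OF S_convergent] by (auto simp: Bseq_def)
  have partial_b: "(\<Sum>j<k. b j) \<le> suminf b" for k
    using b_summable b_nonneg by (intro sum_le_suminf) auto
  have "\<forall>k. - B - suminf b \<le> W k"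
  proof
    fix k show "- B - suminf b \<le> W k" using V_nonneg[of k] B[of k] partial_b[of k] by (simp add: W_def)
  qed
  moreover have "decseq W" using W_Suc gain_nonneg by (intro decseq_SucI) (smt (verit))
  ultimately obtain w where w: "W \<longlonglongrightarrow> w" "\<And>k. w \<le> W k" using decseq_convergent by blast
  obtain s where s: "S \<longlonglongrightarrow> s" using S_convergent by (auto simp: convergent_def)
  have "(\<lambda>k. W k - S k + (\<Sum>j<k. b j)) \<longlonglongrightarrow> w - s + suminf b"
    by (intro tendsto_intros w s summable_LIMSEQ b_summable)
  moreover have "(\<lambda>k. W k - S k + (\<Sum>j<k. b j)) = V" by (auto simp: W_def)
  ultimately show "convergent V" by (auto simp: convergent_def)
  have "(\<Sum>k<n. c * g k * V k) \<le> W 0 - W n" for n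
  proof (induction n)
    case (Suc n) thus ?case using W_Suc[of n] by simp
  qed simp
  hence "(\<Sum>k<n. c * g k * V k) \<le> W 0 - w" for n using w(2)[of n] by smt
  thus "summable (\<lambda>k. c * g k * V k)" by (rule summableI_nonneg_bounded[OF gain_nonneg])
qed

text \<open>If the limit of \<open>V\<close> were positive, \<open>\<Sum> g\<^sub>k V\<^sub>k < \<infinity>\<close> would force \<open>\<Sum> g\<^sub>k < \<infinity>\<close>.\<close>
lemma perturbed_descent_tendsto_zero:
  fixes V g b S :: "nat \<Rightarrow> real" and c :: real
  assumes V_nonneg: "\<And>k. 0 \<le> V k" and g_nonneg: "\<And>k. 0 \<le> g k" and c_pos: "0 < c"
    and g_not_summable: "\<not> summable g"
    and b_summable: "summable b" and b_nonneg: "\<And>k. 0 \<le> b k" and S_convergent: "convergent S"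
    and descent: "\<And>k. V (Suc k) \<le> V k - c * g k * V k + b k - (S (Suc k) - S k)"
  shows "V \<longlonglongrightarrow> 0"
proof -
  note convergent = perturbed_descent_convergent[OF assms(1-3,5-8)]
  obtain v where v: "V \<longlonglongrightarrow> v" using convergent(1) by (auto simp: convergent_def)
  have "0 \<le> v" using v V_nonneg by (intro LIMSEQ_le_const) auto
  moreover have "v \<le> 0"
  proof (rule ccontr)
    assume "\<not> v \<le> 0"
    hence "eventually (\<lambda>k. v / 2 < V k) sequentially" using v by (intro order_tendstoD(1)) auto
    hence "eventually (\<lambda>k. norm (g k) \<le> 2 / (c * v) * (c * g k * V k)) sequentially"
    proof (rule eventually_mono)
      fix k assume "v / 2 < V k"
      hence "g k * (c * v) \<le> 2 * (c * g k * V k)"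
        using g_nonneg[of k] c_pos mult_left_mono[of "c * v / 2" "c * V k" "g k"]
        by (simp add: algebra_simps)
      thus "norm (g k) \<le> 2 / (c * v) * (c * g k * V k)"
        using g_nonneg[of k] c_pos \<open>\<not> v \<le> 0\<close> by (simp add: field_simps)
    qed
    hence "summable g" by (rule summable_comparison_test_ev) (intro summable_mult convergent(2))
    thus False using g_not_summable by simp
  qed
  ultimately show ?thesis using v by simp
qed

section \<open>Strong convexity and projected gradient steps\<close>

lemma has_derivative_difference_quotient_at_right:
  fixes f :: "'v::euclidean_space \<Rightarrow> real"
  assumes "(f has_derivative (\<lambda>h. gv \<bullet> h)) (at x)"
  shows "((\<lambda>t. (f (x + t *\<^sub>R v) - f x) / t) \<longlongrightarrow> gv \<bullet> v) (at_right 0)"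
proof -
  have l: "((\<lambda>t. x + t *\<^sub>R v) has_derivative (\<lambda>t. t *\<^sub>R v)) (at 0)"
    by (auto intro!: derivative_eq_intros)
  have fd': "(f has_derivative (\<lambda>h. gv \<bullet> h)) (at ((\<lambda>t. x + t *\<^sub>R v) 0))" using assms by simp
  have "((\<lambda>t. f (x + t *\<^sub>R v)) has_derivative (\<lambda>t. gv \<bullet> (t *\<^sub>R v))) (at 0)"
    using has_derivative_compose[OF l fd'] .
  hence "((\<lambda>t. f (x + t *\<^sub>R v)) has_field_derivative (gv \<bullet> v)) (at 0)"
    unfolding has_field_derivative_def by (rule has_derivative_eq_rhs) (auto simp: fun_eq_iff)
  hence "((\<lambda>y. (f (x + y *\<^sub>R v) - f x) / (y - 0)) \<longlongrightarrow> gv \<bullet> v) (at 0)"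
    unfolding has_field_derivative_iff by simp
  hence "((\<lambda>y. (f (x + y *\<^sub>R v) - f x) / y) \<longlongrightarrow> gv \<bullet> v) (at 0)" by simp
  thus ?thesis by (rule tendsto_mono[OF at_le, rotated]) simp
qed

lemma strongly_convex_on_gradient_ineq:
  fixes f :: "'v::euclidean_space \<Rightarrow> real"
  assumes sc: "strongly_convex_on X eta f" and x: "x \<in> X" and y: "y \<in> X"
    and fd: "(f has_derivative (\<lambda>h. gradf x \<bullet> h)) (at x)"
  shows "gradf x \<bullet> (y - x) \<le> f y - f x - eta / 2 * (norm (y - x))\<^sup>2"
proof -
  define r where "r t = f y - f x - eta / 2 * (1 - t) * (norm (y - x))\<^sup>2" for t :: real
  have quotient: "((\<lambda>t. (f (x + t *\<^sub>R (y - x)) - f x) / t) \<longlongrightarrow> gradf x \<bullet> (y - x)) (at_right 0)"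
    by (rule has_derivative_difference_quotient_at_right[OF fd])
  have r: "(r \<longlongrightarrow> r 0) (at_right 0)" unfolding r_def by (intro tendsto_intros)
  have "eventually (\<lambda>t. (f (x + t *\<^sub>R (y - x)) - f x) / t \<le> r t) (at_right 0)"
    unfolding eventually_at_right_field
  proof (intro exI[of _ 1] conjI allI impI)
    fix t :: real assume t: "0 < t" "t < 1"
    have "f ((1 - t) *\<^sub>R x + t *\<^sub>R y)
        \<le> (1 - t) * f x + t * f y - eta / 2 * t * (1 - t) * (norm (x - y))\<^sup>2"
      using sc x y t unfolding strongly_convex_on_def by auto
    moreover have "x + t *\<^sub>R (y - x) = (1 - t) *\<^sub>R x + t *\<^sub>R y" by (simp add: algebra_simps)
    ultimately have "f (x + t *\<^sub>R (y - x)) - f x \<le> t * r t"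
      by (simp add: r_def algebra_simps norm_minus_commute)
    thus "(f (x + t *\<^sub>R (y - x)) - f x) / t \<le> r t" using t by (simp add: divide_le_eq mult.commute)
  qed simp
  from tendsto_le[OF _ r quotient this] show ?thesis by (simp add: r_def)
qed

lemma minimizer_gradient_nonneg:
  fixes f :: "'v::euclidean_space \<Rightarrow> real"
  assumes cX: "convex X" and x: "x \<in> X" and y: "y \<in> X" and min: "\<forall>z\<in>X. f x \<le> f z"
    and fd: "(f has_derivative (\<lambda>h. gradf x \<bullet> h)) (at x)"
  shows "gradf x \<bullet> (y - x) \<ge> 0"
proof -
  have lim1: "((\<lambda>t. (f (x + t *\<^sub>R (y - x)) - f x) / t) \<longlongrightarrow> gradf x \<bullet> (y - x)) (at_right 0)"
    by (rule has_derivative_difference_quotient_at_right[OF fd])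
  have ev: "eventually (\<lambda>t. 0 \<le> (f (x + t *\<^sub>R (y - x)) - f x) / t) (at_right (0::real))"
    unfolding eventually_at_right_field
  proof (intro exI[of _ 1] conjI allI impI)
    show "(0::real) < 1" by simp
    fix t :: real assume t0: "0 < t" and t1: "t < 1"
    note t = t0 t1
    have "x + t *\<^sub>R (y - x) = (1 - t) *\<^sub>R x + t *\<^sub>R y" by (simp add: algebra_simps)
    moreover have "(1 - t) *\<^sub>R x + t *\<^sub>R y \<in> X"
      using convexD_alt[OF cX x y, of t] t by (simp add: algebra_simps)
    ultimately have "f x \<le> f (x + t *\<^sub>R (y - x))" using min by simp
    thus "0 \<le> (f (x + t *\<^sub>R (y - x)) - f x) / t" using t by simp
  qed
  show ?thesis using tendsto_le[OF _ lim1 tendsto_const ev] by simp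
qed

lemma strongly_convex_on_gradient_monotone:
  fixes f :: "'v::euclidean_space \<Rightarrow> real"
  assumes sc: "strongly_convex_on X eta f" and x: "x \<in> X" and y: "y \<in> X"
    and fx: "(f has_derivative (\<lambda>h. gradf x \<bullet> h)) (at x)"
    and fy: "(f has_derivative (\<lambda>h. gradf y \<bullet> h)) (at y)"
  shows "eta * (norm (y - x))\<^sup>2 \<le> (gradf y - gradf x) \<bullet> (y - x)"
proof -
  have "gradf y \<bullet> (x - y) \<le> f x - f y - eta / 2 * (norm (x - y))\<^sup>2"
    using strongly_convex_on_gradient_ineq[OF sc y x, of gradf] fy by blast
  moreover have "gradf x \<bullet> (y - x) \<le> f y - f x - eta / 2 * (norm (y - x))\<^sup>2"
    using strongly_convex_on_gradient_ineq[OF sc x y, of gradf] fx by blast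
  ultimately show ?thesis
    by (simp add: norm_minus_commute inner_diff_left inner_diff_right algebra_simps)
qed

lemma strongly_convex_on_unique_minimizer:
  fixes f :: "'v::euclidean_space \<Rightarrow> real"
  assumes "compact X" "convex X" "X \<noteq> {}" "0 < eta"
    and sc: "strongly_convex_on X eta f" and "continuous_on X f"
  shows "\<exists>!xs. xs \<in> X \<and> (\<forall>y\<in>X. f xs \<le> f y)"
proof (rule ex_ex1I)
  show "\<exists>xs. xs \<in> X \<and> (\<forall>y\<in>X. f xs \<le> f y)"
    using continuous_attains_inf[OF assms(1,3,6)] by blast
next
  fix x y assume x: "x \<in> X \<and> (\<forall>z\<in>X. f x \<le> f z)" and y: "y \<in> X \<and> (\<forall>z\<in>X. f y \<le> f z)"
  have midpoint: "f ((1 - t) *\<^sub>R x + t *\<^sub>R y)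
      \<le> (1 - t) * f x + t * f y - eta / 2 * t * (1 - t) * (norm (x - y))\<^sup>2" if "t = 1 / 2" for t
    using sc x y that unfolding strongly_convex_on_def by auto
  have "(1 - 1 / 2) *\<^sub>R x + (1 / 2) *\<^sub>R y \<in> X" using convexD_alt[OF assms(2), of x y "1 / 2"] x y by simp
  hence "f x \<le> f ((1 - 1 / 2) *\<^sub>R x + (1 / 2) *\<^sub>R y)" using x by blast
  also have "\<dots> \<le> (1 - 1 / 2) * f x + 1 / 2 * f y - eta / 2 * (1 / 2) * (1 - 1 / 2) * (norm (x - y))\<^sup>2"
    by (rule midpoint) simp
  finally have "eta * (norm (x - y))\<^sup>2 \<le> 0" using x y by fastforce
  thus "x = y" using \<open>0 < eta\<close> by (simp add: mult_le_0_iff)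
qed

lemma closest_point_step_at_minimizer:
  fixes X :: "'v::euclidean_space set"
  assumes cX: "convex X" and clX: "closed X" and xs: "xs \<in> X" and g: "\<forall>y\<in>X. gs \<bullet> (y - xs) \<ge> 0"
    and gam: "gam \<ge> 0"
  shows "closest_point X (xs - gam *\<^sub>R gs) = xs"
proof -
  have "\<forall>z\<in>X. dist (xs - gam *\<^sub>R gs) xs \<le> dist (xs - gam *\<^sub>R gs) z"
  proof
    fix z assume z: "z \<in> X"
    have "(norm (xs - gam *\<^sub>R gs - z))\<^sup>2
        = (norm (xs - z))\<^sup>2 + 2 * gam * (gs \<bullet> (z - xs)) + (norm (gam *\<^sub>R gs))\<^sup>2"
      by (simp only: power2_norm_eq_inner)
        (simp add: inner_diff inner_add algebra_simps inner_commute power2_eq_square)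
    also have "\<dots> \<ge> (norm (gam *\<^sub>R gs))\<^sup>2" using g z gam by simp
    finally have "norm (gam *\<^sub>R gs) \<le> norm (xs - gam *\<^sub>R gs - z)" by (simp add: power2_le_iff_abs_le)
    thus "dist (xs - gam *\<^sub>R gs) xs \<le> dist (xs - gam *\<^sub>R gs) z" by (simp add: dist_norm)
  qed
  thus ?thesis using closest_point_unique[OF cX clX xs] by simp
qed

lemma closest_point_step_sq_dist_le:
  fixes X :: "'v::euclidean_space set"
  assumes cX: "convex X" and clX: "closed X" and ne: "X \<noteq> {}" and xs: "xs \<in> X"
    and fp: "closest_point X (xs - gam *\<^sub>R gs) = xs"
    and mono: "(g - gs) \<bullet> (x - xs) \<ge> eta * (norm (x - xs))\<^sup>2"
    and lip: "norm (g - gs) \<le> L * norm (x - xs)" and L: "L \<ge> 0" and gam: "gam \<ge> 0"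
  shows "(norm (closest_point X (x - gam *\<^sub>R (g + w)) - xs))\<^sup>2 \<le>
    (norm (x - xs))\<^sup>2 - 2 * eta * gam * (norm (x - xs))\<^sup>2 + gam\<^sup>2 * L\<^sup>2 * (norm (x - xs))\<^sup>2
    + gam\<^sup>2 * (norm w)\<^sup>2 - 2 * gam * (w \<bullet> (x - xs - gam *\<^sub>R (g - gs)))"
proof -
  define u where "u = x - xs - gam *\<^sub>R (g - gs)"
  from closest_point_lipschitz[OF cX clX ne, of "x - gam *\<^sub>R (g + w)" "xs - gam *\<^sub>R gs"]
  have "norm (closest_point X (x - gam *\<^sub>R (g + w)) - xs) \<le> norm (u - gam *\<^sub>R w)"
    unfolding fp dist_norm u_def by (simp add: algebra_simps)
  hence a: "(norm (closest_point X (x - gam *\<^sub>R (g + w)) - xs))\<^sup>2 \<le> (norm (u - gam *\<^sub>R w))\<^sup>2"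
    by (simp add: power_mono)
  have b: "(norm (u - gam *\<^sub>R w))\<^sup>2 = (norm u)\<^sup>2 - 2 * gam * (w \<bullet> u) + gam\<^sup>2 * (norm w)\<^sup>2"
    by (simp only: power2_norm_eq_inner)
      (simp add: inner_diff inner_commute power2_eq_square algebra_simps)
  have c: "(norm u)\<^sup>2 = (norm (x - xs))\<^sup>2 - 2 * gam * ((g - gs) \<bullet> (x - xs)) + gam\<^sup>2 * (norm (g - gs))\<^sup>2"
    unfolding u_def by (simp only: power2_norm_eq_inner)
      (simp add: inner_diff inner_commute power2_eq_square algebra_simps)
  have d: "gam\<^sup>2 * (norm (g - gs))\<^sup>2 \<le> gam\<^sup>2 * (L\<^sup>2 * (norm (x - xs))\<^sup>2)"
    using lip L by (intro mult_left_mono) (auto simp: power_mult_distrib[symmetric] power_mono)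
  have e: "2 * gam * ((g - gs) \<bullet> (x - xs)) \<ge> 2 * gam * (eta * (norm (x - xs))\<^sup>2)"
    using mono gam by (intro mult_left_mono) auto
  show ?thesis using a b c d e unfolding u_def[symmetric] by (simp add: algebra_simps)
qed

section \<open>Measurability of the stochastic gradient\<close>

lemma open_dense_sequence:
  fixes U :: "'v::{metric_space, second_countable_topology} set"
  assumes "open U" "U \<noteq> {}"
  obtains e :: "nat \<Rightarrow> 'v"
  where "\<And>m. e m \<in> U" "\<And>y r. y \<in> U \<Longrightarrow> 0 < r \<Longrightarrow> \<exists>m. dist (e m) y < r"
proof -
  obtain D :: "'v set" where D: "countable D" "\<And>X. open X \<Longrightarrow> X \<noteq> {} \<Longrightarrow> \<exists>d\<in>D. d \<in> X"
    by (rule countable_dense_setE) blast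
  have dense: "\<exists>d\<in>D \<inter> U. dist d y < r" if "y \<in> U" "0 < r" for y r
  proof -
    have "open (ball y r \<inter> U)" "y \<in> ball y r \<inter> U" using assms(1) that by auto
    then obtain d where "d \<in> D" "d \<in> ball y r \<inter> U" using D(2) by blast
    thus ?thesis by (auto simp: dist_commute)
  qed
  obtain y where "y \<in> U" using assms(2) by blast
  hence nonempty: "D \<inter> U \<noteq> {}" using dense[of y 1] by auto
  show ?thesis
  proof (rule that)
    show "from_nat_into (D \<inter> U) m \<in> U" for m using from_nat_into[OF nonempty] by blast
    fix y and r :: real assume "y \<in> U" "0 < r"
    then obtain d where "d \<in> D \<inter> U" "dist d y < r" using dense by blast
    moreover have "d \<in> range (from_nat_into (D \<inter> U))"
      using \<open>d \<in> D \<inter> U\<close> D(1) range_from_nat_into[OF nonempty] by simp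
    ultimately show "\<exists>m. dist (from_nat_into (D \<inter> U) m) y < r" by auto
  qed
qed

text \<open>Measurability of \<open>\<omega> \<mapsto> h (\<phi> \<omega>) (\<psi> \<omega>)\<close> for a Carath\'eodory integrand \<open>h\<close>
  (continuous in its first, measurable in its second argument): evaluate \<open>h\<close> along a countable
  dense sequence, choosing the first point within \<open>1 / (n + 1)\<close> of \<open>\<phi> \<omega>\<close>, and pass to the limit.\<close>
lemma caratheodory_measurable:
  fixes h :: "'v::euclidean_space \<Rightarrow> 'b \<Rightarrow> real" and U :: "'v set"
  assumes U: "open U" and h_cont: "\<And>z. z \<in> space N \<Longrightarrow> continuous_on U (\<lambda>y. h y z)"
    and h_meas: "\<And>y. y \<in> U \<Longrightarrow> h y \<in> borel_measurable N"
    and phi[measurable]: "phi \<in> borel_measurable M" and psi[measurable]: "psi \<in> measurable M N"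
  shows "(\<lambda>\<omega>. if phi \<omega> \<in> U then h (phi \<omega>) (psi \<omega>) else 0) \<in> borel_measurable M"
proof (cases "U = {}")
  case False
  have [measurable]: "U \<in> sets borel" using U by simp
  obtain e :: "nat \<Rightarrow> 'v" where eU: "\<And>m. e m \<in> U" and e_dense: "\<And>y r. y \<in> U \<Longrightarrow> 0 < r \<Longrightarrow> \<exists>m. dist (e m) y < r"
    using open_dense_sequence[OF U False] by blast
  define idx where "idx n y = (LEAST m. dist (e m) y < 1 / real (Suc n))" for n y
  have idx: "dist (e (idx n y)) y < 1 / real (Suc n)" if "y \<in> U" for n y
    unfolding idx_def by (rule LeastI_ex) (rule e_dense[OF that], simp)
  define H where "H n \<omega> = (if phi \<omega> \<in> U then h (e (idx n (phi \<omega>))) (psi \<omega>) else 0)" for n \<omega>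
  have H_meas: "H n \<in> borel_measurable M" for n
  proof -
    have idx_meas: "(\<lambda>\<omega>. idx n (phi \<omega>)) \<in> measurable M (count_space UNIV)"
      unfolding idx_def by measurable
    have at_index: "(\<lambda>\<omega>. if phi \<omega> \<in> U then h (e m) (psi \<omega>) else 0) \<in> borel_measurable M" for m
    proof -
      have [measurable]: "h (e m) \<in> borel_measurable N" by (rule h_meas[OF eU])
      show ?thesis by measurable
    qed
    have "(\<lambda>\<omega>. (\<lambda>m \<omega>. if phi \<omega> \<in> U then h (e m) (psi \<omega>) else 0) (idx n (phi \<omega>)) \<omega>)
        \<in> borel_measurable M"
      by (rule measurable_compose_countable[OF at_index idx_meas])
    thus ?thesis unfolding H_def[abs_def] by simp
  qed
  have H_lim: "(\<lambda>n. H n \<omega>) \<longlonglongrightarrow> (if phi \<omega> \<in> U then h (phi \<omega>) (psi \<omega>) else 0)"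
    if \<omega>: "\<omega> \<in> space M" for \<omega>
  proof (cases "phi \<omega> \<in> U")
    case True
    have "(\<lambda>n. dist (e (idx n (phi \<omega>))) (phi \<omega>)) \<longlonglongrightarrow> 0"
    proof (rule tendsto_sandwich[of "\<lambda>_. 0" _ _ "\<lambda>n. 1 / real (Suc n)"])
      show "\<forall>\<^sub>F n in sequentially. dist (e (idx n (phi \<omega>))) (phi \<omega>) \<le> 1 / real (Suc n)"
        using idx[OF True] by (simp add: less_imp_le)
      show "(\<lambda>n. 1 / real (Suc n)) \<longlonglongrightarrow> 0" by (rule LIMSEQ_Suc[OF lim_const_over_n])
    qed simp_all
    hence "(\<lambda>n. e (idx n (phi \<omega>))) \<longlonglongrightarrow> phi \<omega>" by (rule tendsto_dist_iff[THEN iffD2])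
    moreover have "psi \<omega> \<in> space N" using psi \<omega> by (auto simp: measurable_def)
    ultimately have "(\<lambda>n. h (e (idx n (phi \<omega>))) (psi \<omega>)) \<longlonglongrightarrow> h (phi \<omega>) (psi \<omega>)"
      by (intro continuous_on_tendsto_compose[OF h_cont _ True]) (simp_all add: eU)
    thus ?thesis using True by (simp add: H_def)
  qed (simp add: H_def)
  show ?thesis by (rule borel_measurable_LIMSEQ_real[OF H_lim H_meas])
qed simp

text \<open>Each coordinate of \<open>G\<close> is the limit of difference quotients of \<open>F\<close>, which are measurable
  by the previous lemma.\<close>
lemma gradient_measurable:
  fixes F :: "'v::euclidean_space \<Rightarrow> 'b \<Rightarrow> real" and G :: "'v \<Rightarrow> 'b \<Rightarrow> 'v"
  assumes U: "open U" and XU: "X \<subseteq> U"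
    and Fc: "\<And>z. z \<in> space N \<Longrightarrow> continuous_on U (\<lambda>y. F y z)"
    and Fm: "\<And>y. y \<in> U \<Longrightarrow> F y \<in> borel_measurable N"
    and Fg: "\<And>y z. y \<in> X \<Longrightarrow> z \<in> space N \<Longrightarrow>
      ((\<lambda>u. F u z) has_derivative (\<lambda>h. G y z \<bullet> h)) (at y)"
    and phi[measurable]: "phi \<in> borel_measurable M"
    and phiX: "\<And>\<omega>. \<omega> \<in> space M \<Longrightarrow> phi \<omega> \<in> X"
    and psi[measurable]: "psi \<in> measurable M N"
  shows "(\<lambda>\<omega>. G (phi \<omega>) (psi \<omega>)) \<in> borel_measurable M"
proof (rule borel_measurable_euclidean_space[THEN iffD2], rule ballI)
  fix i :: 'v assume i: "i \<in> Basis"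
  define Fext where "Fext y \<omega> = (if y \<in> U then F y (psi \<omega>) else 0)" for y \<omega>
  define H where "H n \<omega> = (Fext (phi \<omega> + inverse (real n) *\<^sub>R i) \<omega> - Fext (phi \<omega>) \<omega>) / inverse (real n)"
    for n \<omega>
  have Hm: "H n \<in> borel_measurable M" for n
  proof -
    have [measurable]: "(\<lambda>\<omega>. Fext (phi \<omega> + inverse (real n) *\<^sub>R i) \<omega>) \<in> borel_measurable M"
      unfolding Fext_def by (rule caratheodory_measurable[OF U Fc Fm]) auto
    have [measurable]: "(\<lambda>\<omega>. Fext (phi \<omega>) \<omega>) \<in> borel_measurable M"
      unfolding Fext_def by (rule caratheodory_measurable[OF U Fc Fm]) auto
    show ?thesis unfolding H_def by measurable
  qed
  show "(\<lambda>\<omega>. G (phi \<omega>) (psi \<omega>) \<bullet> i) \<in> borel_measurable M"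
  proof (rule borel_measurable_LIMSEQ_real[OF _ Hm])
    fix \<omega> assume \<omega>: "\<omega> \<in> space M"
    define y where "y = phi \<omega>"
    define z where "z = psi \<omega>"
    have yX: "y \<in> X" using phiX[OF \<omega>] by (simp add: y_def)
    have yU: "y \<in> U" using yX XU by auto
    have zN: "z \<in> space N" using psi \<omega> by (auto simp: measurable_def z_def)
    have dl: "((\<lambda>t. (F (y + t *\<^sub>R i) z - F y z) / t) \<longlongrightarrow> G y z \<bullet> i) (at_right 0)"
      by (rule has_derivative_difference_quotient_at_right[OF Fg[OF yX zN]])
    have tl: "filterlim (\<lambda>n. inverse (real n)) (at_right (0::real)) sequentially"
      by (rule filterlim_compose[OF filterlim_inverse_at_right_top filterlim_real_sequentially])
    have c1: "(\<lambda>n. (F (y + inverse (real n) *\<^sub>R i) z - F y z) / inverse (real n)) \<longlonglongrightarrow> G y z \<bullet> i"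
      using filterlim_compose[OF dl tl] by simp
    obtain r where r: "r > 0" "ball y r \<subseteq> U" using U yU by (force simp: open_contains_ball)
    have tl0: "(\<lambda>n. inverse (real n)) \<longlonglongrightarrow> 0"
      by (rule tendsto_inverse_0_at_top[OF filterlim_real_sequentially])
    have "eventually (\<lambda>n. inverse (real n) < r) sequentially" using order_tendstoD(2)[OF tl0 r(1)] .
    hence "eventually (\<lambda>n. (F (y + inverse (real n) *\<^sub>R i) z - F y z) / inverse (real n) = H n \<omega>)
      sequentially"
    proof (rule eventually_mono)
      fix n assume n: "inverse (real n) < r"
      have "dist y (y + inverse (real n) *\<^sub>R i) < r" using n i by (simp add: dist_norm)
      hence "y + inverse (real n) *\<^sub>R i \<in> U" using r by auto
      thus "(F (y + inverse (real n) *\<^sub>R i) z - F y z) / inverse (real n) = H n \<omega>"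
        using yU by (simp add: H_def Fext_def y_def z_def)
    qed
    from Lim_transform_eventually[OF c1 this]
    show "(\<lambda>n. H n \<omega>) \<longlonglongrightarrow> G (phi \<omega>) (psi \<omega>) \<bullet> i" by (simp add: y_def z_def)
  qed
qed

section \<open>The natural filtration\<close>

definition nat_filtration_generators ::
    "'a measure \<Rightarrow> 'b measure \<Rightarrow> ('a \<Rightarrow> 'v::topological_space) \<Rightarrow> (nat \<Rightarrow> 'a \<Rightarrow> 'b) \<Rightarrow> nat \<Rightarrow> 'a set set"
  where "nat_filtration_generators M N x0 xi k =
    {x0 -` A \<inter> space M | A. A \<in> sets borel} \<union> {xi j -` B \<inter> space M | j B. j < k \<and> B \<in> sets N}"

lemma nat_filtration_generators_Pow: "nat_filtration_generators M N x0 xi k \<subseteq> Pow (space M)"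
  unfolding nat_filtration_generators_def by auto

lemma nat_filtration_eq_sigma:
  "nat_filtration M N x0 xi k = sigma (space M) (nat_filtration_generators M N x0 xi k)"
  unfolding nat_filtration_def nat_filtration_generators_def ..

lemma space_nat_filtration[simp]: "space (nat_filtration M N x0 xi k) = space M"
  unfolding nat_filtration_eq_sigma by (simp add: nat_filtration_generators_Pow)

lemma sets_nat_filtration:
  "sets (nat_filtration M N x0 xi k) = sigma_sets (space M) (nat_filtration_generators M N x0 xi k)"
  unfolding nat_filtration_eq_sigma by (simp add: nat_filtration_generators_Pow)

lemma sets_nat_filtration_mono:
  "j \<le> k \<Longrightarrow> sets (nat_filtration M N x0 xi j) \<subseteq> sets (nat_filtration M N x0 xi k)"
  unfolding sets_nat_filtration
  by (rule sigma_sets_subseteq) (unfold nat_filtration_generators_def, blast dest: less_le_trans)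

lemma subalgebra_nat_filtration:
  assumes x0: "x0 \<in> borel_measurable M" and xi: "\<And>j. xi j \<in> measurable M N"
  shows "subalgebra M (nat_filtration M N x0 xi k)"
proof -
  have "nat_filtration_generators M N x0 xi k \<subseteq> sets M"
    using x0 xi unfolding nat_filtration_generators_def by (auto simp: measurable_sets)
  hence "sigma_sets (space M) (nat_filtration_generators M N x0 xi k) \<subseteq> sets M"
    by (rule sets.sigma_sets_subset)
  thus ?thesis unfolding subalgebra_def sets_nat_filtration by simp
qed

lemma measurable_nat_filtration_mono:
  "j \<le> k \<Longrightarrow> f \<in> measurable (nat_filtration M N x0 xi j) K \<Longrightarrow> f \<in> measurable (nat_filtration M N x0 xi k) K"
  using sets_nat_filtration_mono[of j k M N x0 xi] unfolding measurable_def by auto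

lemma measurable_nat_filtration_initial:
  fixes x0 :: "'a \<Rightarrow> 'v::topological_space"
  assumes x0: "x0 \<in> borel_measurable M"
  shows "x0 \<in> borel_measurable (nat_filtration M N x0 xi k)"
proof (rule measurableI)
  fix A :: "'v set" assume "A \<in> sets borel"
  hence "x0 -` A \<inter> space M \<in> nat_filtration_generators M N x0 xi k"
    unfolding nat_filtration_generators_def by blast
  thus "x0 -` A \<inter> space (nat_filtration M N x0 xi k) \<in> sets (nat_filtration M N x0 xi k)"
    unfolding sets_nat_filtration by auto
qed simp

lemma measurable_nat_filtration_noise:
  assumes xi: "xi j \<in> measurable M N" and jk: "j < k"
  shows "xi j \<in> measurable (nat_filtration M N x0 xi k) N"
proof (rule measurableI)
  fix x assume "x \<in> space (nat_filtration M N x0 xi k)"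
  thus "xi j x \<in> space N" using xi by (auto simp: measurable_def)
next
  fix B assume "B \<in> sets N"
  hence "xi j -` B \<inter> space M \<in> nat_filtration_generators M N x0 xi k"
    unfolding nat_filtration_generators_def using jk by blast
  thus "xi j -` B \<inter> space (nat_filtration M N x0 xi k) \<in> sets (nat_filtration M N x0 xi k)"
    unfolding sets_nat_filtration by auto
qed

section \<open>Square-integrable martingale differences\<close>

locale filtered_prob_space = prob_space M for M :: "'a measure" +
  fixes Fk :: "nat \<Rightarrow> 'a measure"
  assumes subalgebra: "\<And>k. subalgebra M (Fk k)"
    and filtration_mono: "\<And>j k. j \<le> k \<Longrightarrow> sets (Fk j) \<subseteq> sets (Fk k)"
begin

lemma space_filtration[simp]: "space (Fk k) = space M"
  using subalgebra[of k] by (simp add: subalgebra_def)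

lemma measurable_filtration_mono: "j \<le> k \<Longrightarrow> f \<in> borel_measurable (Fk j) \<Longrightarrow> f \<in> borel_measurable (Fk k)"
  using filtration_mono[of j k] unfolding measurable_def by auto

lemma measurable_from_filtration: "f \<in> borel_measurable (Fk k) \<Longrightarrow> f \<in> borel_measurable M"
  by (rule measurable_from_subalg[OF subalgebra])

end

lemma integrable_mult_if_square_integrable:
  fixes f g :: "'a \<Rightarrow> real"
  assumes [measurable]: "f \<in> borel_measurable M" "g \<in> borel_measurable M"
    and "integrable M (\<lambda>x. (f x)\<^sup>2)" "integrable M (\<lambda>x. (g x)\<^sup>2)"
  shows "integrable M (\<lambda>x. f x * g x)"
proof (rule Bochner_Integration.integrable_bound[of _ "\<lambda>x. (f x)\<^sup>2 + (g x)\<^sup>2"])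
  show "integrable M (\<lambda>x. (f x)\<^sup>2 + (g x)\<^sup>2)" using assms by simp
  show "(\<lambda>x. f x * g x) \<in> borel_measurable M" by measurable
  show "AE x in M. norm (f x * g x) \<le> norm ((f x)\<^sup>2 + (g x)\<^sup>2)"
  proof (rule AE_I2)
    fix x
    have "0 \<le> (\<bar>f x\<bar> - \<bar>g x\<bar>)\<^sup>2" by simp
    hence "2 * \<bar>f x\<bar> * \<bar>g x\<bar> \<le> (f x)\<^sup>2 + (g x)\<^sup>2" by (simp add: power2_eq_square algebra_simps)
    moreover have "\<bar>f x\<bar> * \<bar>g x\<bar> \<ge> 0" by simp
    ultimately have "\<bar>f x\<bar> * \<bar>g x\<bar> \<le> (f x)\<^sup>2 + (g x)\<^sup>2" by linarith
    thus "norm (f x * g x) \<le> norm ((f x)\<^sup>2 + (g x)\<^sup>2)" by (simp add: abs_mult)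
  qed
qed

lemma inner_sq_integrable:
  assumes "integrable M (\<lambda>\<omega>. (norm (v \<omega>))\<^sup>2)" "v \<in> borel_measurable M" "i \<in> Basis"
  shows "integrable M (\<lambda>\<omega>. (v \<omega> \<bullet> i)\<^sup>2)"
proof (rule Bochner_Integration.integrable_bound[OF assms(1)])
  show "(\<lambda>\<omega>. (v \<omega> \<bullet> i)\<^sup>2) \<in> borel_measurable M" using assms(2) by measurable
  have "\<bar>v \<omega> \<bullet> i\<bar>\<^sup>2 \<le> (norm (v \<omega>))\<^sup>2" for \<omega>
    using Basis_le_norm[OF assms(3), of "v \<omega>"] by (intro power_mono) (simp_all add: inner_commute)
  thus "AE \<omega> in M. norm ((v \<omega> \<bullet> i)\<^sup>2) \<le> norm ((norm (v \<omega>))\<^sup>2)" by simp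
qed

lemma integrable_square_add:
  fixes f g :: "'a \<Rightarrow> real"
  assumes [measurable]: "f \<in> borel_measurable M" "g \<in> borel_measurable M"
    and "integrable M (\<lambda>x. (f x)\<^sup>2)" "integrable M (\<lambda>x. (g x)\<^sup>2)"
  shows "integrable M (\<lambda>x. (f x + g x)\<^sup>2)"
proof -
  have "integrable M (\<lambda>x. (f x)\<^sup>2 + 2 * (f x * g x) + (g x)\<^sup>2)"
    using assms integrable_mult_if_square_integrable[OF assms] by simp
  thus ?thesis by (simp add: power2_eq_square algebra_simps)
qed

text \<open>Martingale differences enter only through their orthogonality to square-integrable
  \<open>Fk k\<close>-measurable functions, which is all that Kolmogorov's maximal inequality uses.\<close>
locale sq_martingale_diff = filtered_prob_space +
  fixes d :: "nat \<Rightarrow> 'a \<Rightarrow> real"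
  assumes d_adapted: "\<And>k. d k \<in> borel_measurable (Fk (Suc k))"
    and d_sq_integrable: "\<And>k. integrable M (\<lambda>\<omega>. (d k \<omega>)\<^sup>2)"
    and d_orthogonal: "\<And>k g. g \<in> borel_measurable (Fk k) \<Longrightarrow> integrable M (\<lambda>\<omega>. (g \<omega>)\<^sup>2) \<Longrightarrow>
      (\<integral>\<omega>. g \<omega> * d k \<omega> \<partial>M) = 0"
begin

lemma d_measurable[measurable]: "d k \<in> borel_measurable M"
  by (rule measurable_from_filtration[OF d_adapted])

definition incr :: "nat \<Rightarrow> nat \<Rightarrow> 'a \<Rightarrow> real" where "incr m j \<omega> = (\<Sum>k\<in>{m..<j}. d k \<omega>)"

lemma incr_adapted: "incr m j \<in> borel_measurable (Fk j)"
  unfolding incr_def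
proof (rule borel_measurable_sum)
  fix k assume "k \<in> {m..<j}"
  thus "d k \<in> borel_measurable (Fk j)" by (intro measurable_filtration_mono[OF _ d_adapted]) auto
qed

lemma incr_measurable[measurable]: "incr m j \<in> borel_measurable M"
  by (rule measurable_from_filtration[OF incr_adapted])

lemma incr_Suc: "m \<le> j \<Longrightarrow> incr m (Suc j) \<omega> = incr m j \<omega> + d j \<omega>"
  by (simp add: incr_def)

lemma incr_split: "m \<le> j \<Longrightarrow> j \<le> n \<Longrightarrow> incr m n \<omega> = incr m j \<omega> + incr j n \<omega>"
  unfolding incr_def by (metis sum.atLeastLessThan_concat)

lemma incr_sq_integrable: "integrable M (\<lambda>\<omega>. (incr m j \<omega>)\<^sup>2)"
proof (induction j)
  case 0 thus ?case by (simp add: incr_def)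
next
  case (Suc j)
  show ?case
  proof (cases "m \<le> j")
    case True
    have "integrable M (\<lambda>\<omega>. (incr m j \<omega> + d j \<omega>)\<^sup>2)"
      by (rule integrable_square_add) (use Suc d_sq_integrable in auto)
    thus ?thesis using True by (simp add: incr_Suc)
  next
    case False thus ?thesis by (simp add: incr_def)
  qed
qed

lemma integral_incr_sq:
  "m \<le> n \<Longrightarrow> (\<integral>\<omega>. (incr m n \<omega>)\<^sup>2 \<partial>M) = (\<Sum>k\<in>{m..<n}. \<integral>\<omega>. (d k \<omega>)\<^sup>2 \<partial>M)"
proof (induction n rule: dec_induct)
  case base thus ?case by (simp add: incr_def)
next
  case (step n)
  have orthogonal: "(\<integral>\<omega>. incr m n \<omega> * d n \<omega> \<partial>M) = 0"
    by (rule d_orthogonal[OF incr_adapted incr_sq_integrable])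
  have cross_integrable: "integrable M (\<lambda>\<omega>. incr m n \<omega> * d n \<omega>)"
    by (rule integrable_mult_if_square_integrable) (use incr_sq_integrable d_sq_integrable in auto)
  have "(\<integral>\<omega>. (incr m (Suc n) \<omega>)\<^sup>2 \<partial>M)
      = (\<integral>\<omega>. (incr m n \<omega>)\<^sup>2 + 2 * (incr m n \<omega> * d n \<omega>) + (d n \<omega>)\<^sup>2 \<partial>M)"
    using step(1)
    by (intro Bochner_Integration.integral_cong) (auto simp: incr_Suc power2_eq_square algebra_simps)
  also have "\<dots> = (\<integral>\<omega>. (incr m n \<omega>)\<^sup>2 \<partial>M) + 2 * (\<integral>\<omega>. incr m n \<omega> * d n \<omega> \<partial>M)
      + (\<integral>\<omega>. (d n \<omega>)\<^sup>2 \<partial>M)"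
    using incr_sq_integrable cross_integrable d_sq_integrable by simp
  finally show ?case using step orthogonal by simp
qed

lemma integral_adapted_mult_incr:
  assumes g: "g \<in> borel_measurable (Fk j)" and g_sq: "integrable M (\<lambda>\<omega>. (g \<omega>)\<^sup>2)"
  shows "(\<integral>\<omega>. g \<omega> * incr j n \<omega> \<partial>M) = 0"
proof -
  have [measurable]: "g \<in> borel_measurable M" by (rule measurable_from_filtration[OF g])
  have "(\<integral>\<omega>. g \<omega> * incr j n \<omega> \<partial>M) = (\<Sum>k\<in>{j..<n}. \<integral>\<omega>. g \<omega> * d k \<omega> \<partial>M)"
    unfolding incr_def sum_distrib_left
    by (rule Bochner_Integration.integral_sum)
      (rule integrable_mult_if_square_integrable, use g_sq d_sq_integrable in auto)
  also have "\<dots> = 0"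
    using d_orthogonal[OF measurable_filtration_mono[OF _ g] g_sq] by simp
  finally show ?thesis .
qed

lemma integral_indicator_incr_sq_mono:
  assumes A: "A \<in> sets (Fk j)" and "m \<le> j" "j \<le> n"
  shows "(\<integral>\<omega>. indicator A \<omega> * (incr m j \<omega>)\<^sup>2 \<partial>M) \<le> (\<integral>\<omega>. indicator A \<omega> * (incr m n \<omega>)\<^sup>2 \<partial>M)"
proof -
  define g where "g \<omega> = indicator A \<omega> * incr m j \<omega>" for \<omega>
  have AM: "A \<in> sets M" using A subalgebra[of j] by (auto simp: subalgebra_def)
  have gF: "g \<in> borel_measurable (Fk j)" unfolding g_def using A incr_adapted by measurable
  have [measurable]: "g \<in> borel_measurable M" by (rule measurable_from_filtration[OF gF])
  have g_sq: "integrable M (\<lambda>\<omega>. (g \<omega>)\<^sup>2)"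
  proof (rule Bochner_Integration.integrable_bound[OF incr_sq_integrable[of m j]])
    show "(\<lambda>\<omega>. (g \<omega>)\<^sup>2) \<in> borel_measurable M" by measurable
  qed (simp add: g_def indicator_def power2_eq_square)
  have indicator_integrable: "integrable M (\<lambda>\<omega>. indicator A \<omega> * (incr i l \<omega>)\<^sup>2)" for i l
    using integrable_real_mult_indicator[OF AM incr_sq_integrable[of i l]] by (simp add: mult.commute)
  have "(\<integral>\<omega>. indicator A \<omega> * (incr m n \<omega>)\<^sup>2 \<partial>M) =
      (\<integral>\<omega>. indicator A \<omega> * (incr m j \<omega>)\<^sup>2 + 2 * (g \<omega> * incr j n \<omega>) + indicator A \<omega> * (incr j n \<omega>)\<^sup>2 \<partial>M)"
    by (intro Bochner_Integration.integral_cong)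
      (auto simp: incr_split[OF assms(2,3)] g_def power2_eq_square algebra_simps indicator_def)
  also have "\<dots> = (\<integral>\<omega>. indicator A \<omega> * (incr m j \<omega>)\<^sup>2 \<partial>M) + 2 * (\<integral>\<omega>. g \<omega> * incr j n \<omega> \<partial>M)
      + (\<integral>\<omega>. indicator A \<omega> * (incr j n \<omega>)\<^sup>2 \<partial>M)"
    using indicator_integrable integrable_mult_if_square_integrable[of g M "incr j n"] g_sq incr_sq_integrable
    by simp
  also have "\<dots> = (\<integral>\<omega>. indicator A \<omega> * (incr m j \<omega>)\<^sup>2 \<partial>M) + (\<integral>\<omega>. indicator A \<omega> * (incr j n \<omega>)\<^sup>2 \<partial>M)"
    using integral_adapted_mult_incr[OF gF g_sq] by simp
  finally show ?thesis
    by (smt (verit) integral_nonneg_AE indicator_pos_le zero_le_mult_iff zero_le_power2 AE_I2)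
qed

definition first_exit :: "nat \<Rightarrow> real \<Rightarrow> nat \<Rightarrow> 'a set" where
  "first_exit m e j = {\<omega>\<in>space M. e \<le> \<bar>incr m j \<omega>\<bar> \<and> (\<forall>i\<in>{m<..<j}. \<bar>incr m i \<omega>\<bar> < e)}"

lemma first_exit_sets: "first_exit m e j \<in> sets (Fk j)"
proof -
  have "{\<omega>\<in>space (Fk j). \<forall>i\<in>{m<..<j}. \<bar>incr m i \<omega>\<bar> < e} \<in> sets (Fk j)"
  proof (rule sets.sets_Collect_finite_All)
    fix i assume "i \<in> {m<..<j}"
    hence [measurable]: "incr m i \<in> borel_measurable (Fk j)"
      using measurable_filtration_mono[OF _ incr_adapted] by simp
    show "{\<omega>\<in>space (Fk j). \<bar>incr m i \<omega>\<bar> < e} \<in> sets (Fk j)" by measurable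
  qed simp
  moreover have "{\<omega>\<in>space (Fk j). e \<le> \<bar>incr m j \<omega>\<bar>} \<in> sets (Fk j)"
    using incr_adapted[of m j] by measurable
  moreover have "first_exit m e j =
      {\<omega>\<in>space (Fk j). e \<le> \<bar>incr m j \<omega>\<bar>} \<inter> {\<omega>\<in>space (Fk j). \<forall>i\<in>{m<..<j}. \<bar>incr m i \<omega>\<bar> < e}"
    unfolding first_exit_def by auto
  ultimately show ?thesis by auto
qed

lemma first_exit_sets_M: "first_exit m e j \<in> sets M"
  using first_exit_sets[of m e j] subalgebra[of j] by (auto simp: subalgebra_def)

lemma first_exit_disjoint:
  assumes "m < j" "j < l" "\<omega> \<in> first_exit m e j" shows "\<omega> \<notin> first_exit m e l"
proof -
  have "\<not> \<bar>incr m j \<omega>\<bar> < e" using assms(3) by (simp add: first_exit_def)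
  moreover have "j \<in> {m<..<l}" using assms(1,2) by simp
  ultimately show ?thesis by (auto simp: first_exit_def)
qed

lemma exists_first_exit:
  assumes "\<omega> \<in> space M" "j \<in> {m<..n}" "e \<le> \<bar>incr m j \<omega>\<bar>"
  shows "\<exists>l\<in>{m<..n}. \<omega> \<in> first_exit m e l"
proof -
  define l where "l = (LEAST l. m < l \<and> e \<le> \<bar>incr m l \<omega>\<bar>)"
  have l: "m < l" "e \<le> \<bar>incr m l \<omega>\<bar>" "l \<le> j"
    using LeastI[of "\<lambda>l. m < l \<and> e \<le> \<bar>incr m l \<omega>\<bar>" j] Least_le[of _ j] assms(2,3)
    unfolding l_def by auto
  have "\<bar>incr m i \<omega>\<bar> < e" if "i \<in> {m<..<l}" for i
    using not_less_Least[of i "\<lambda>l. m < l \<and> e \<le> \<bar>incr m l \<omega>\<bar>"] that unfolding l_def by auto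
  thus ?thesis using l assms(1,2) by (intro bexI[of _ l]) (auto simp: first_exit_def)
qed

lemma sum_indicator_first_exit_le_1: "(\<Sum>j\<in>{m<..n}. indicator (first_exit m e j) \<omega>) \<le> (1::real)"
proof -
  have "card {j\<in>{m<..n}. \<omega> \<in> first_exit m e j} \<le> 1"
    using first_exit_disjoint by (auto simp: card_le_Suc0_iff_eq) (metis linorder_neqE_nat)
  moreover have "{j\<in>{m<..n}. \<omega> \<in> first_exit m e j} = {m<..n} \<inter> {j. \<omega> \<in> first_exit m e j}" by auto
  ultimately show ?thesis by (simp add: indicator_def of_bool_def sum.If_cases)
qed

lemma sq_prob_first_exit_le:
  assumes "0 \<le> e" "m \<le> j" "j \<le> n"
  shows "e\<^sup>2 * prob (first_exit m e j) \<le> (\<integral>\<omega>. indicator (first_exit m e j) \<omega> * (incr m n \<omega>)\<^sup>2 \<partial>M)"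
proof -
  have "e\<^sup>2 * prob (first_exit m e j) = (\<integral>\<omega>. indicator (first_exit m e j) \<omega> * e\<^sup>2 \<partial>M)"
    using first_exit_sets_M by simp
  also have "\<dots> \<le> (\<integral>\<omega>. indicator (first_exit m e j) \<omega> * (incr m j \<omega>)\<^sup>2 \<partial>M)"
  proof (rule integral_mono)
    show "integrable M (\<lambda>\<omega>. indicator (first_exit m e j) \<omega> * (incr m j \<omega>)\<^sup>2)"
      using integrable_real_mult_indicator[OF first_exit_sets_M incr_sq_integrable]
      by (simp add: mult.commute)
    fix \<omega> show "indicator (first_exit m e j) \<omega> * e\<^sup>2 \<le> indicator (first_exit m e j) \<omega> * (incr m j \<omega>)\<^sup>2"
      using \<open>0 \<le> e\<close> power_mono[of e "\<bar>incr m j \<omega>\<bar>" 2] by (auto simp: first_exit_def indicator_def)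
  qed (use integrable_real_mult_indicator[OF first_exit_sets_M integrable_const[of "e\<^sup>2"]] in \<open>simp add: mult.commute\<close>)
  also have "\<dots> \<le> (\<integral>\<omega>. indicator (first_exit m e j) \<omega> * (incr m n \<omega>)\<^sup>2 \<partial>M)"
    using first_exit_sets assms(2,3) by (rule integral_indicator_incr_sq_mono)
  finally show ?thesis .
qed

text \<open>Decompose according to the first exit time.\<close>
lemma kolmogorov_maximal_ineq:
  assumes "0 \<le> e" "m \<le> n"
  shows "e\<^sup>2 * prob {\<omega>\<in>space M. \<exists>j\<in>{m<..n}. e \<le> \<bar>incr m j \<omega>\<bar>} \<le> (\<Sum>k\<in>{m..<n}. \<integral>\<omega>. (d k \<omega>)\<^sup>2 \<partial>M)"
proof -
  let ?A = "first_exit m e"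
  have indicator_integrable: "integrable M (\<lambda>\<omega>. indicator (?A j) \<omega> * (incr m n \<omega>)\<^sup>2)" for j
    using integrable_real_mult_indicator[OF first_exit_sets_M incr_sq_integrable]
    by (simp add: mult.commute)
  have "{\<omega>\<in>space M. \<exists>j\<in>{m<..n}. e \<le> \<bar>incr m j \<omega>\<bar>} \<subseteq> (\<Union>j\<in>{m<..n}. ?A j)"
  proof
    fix \<omega> assume "\<omega> \<in> {\<omega>\<in>space M. \<exists>j\<in>{m<..n}. e \<le> \<bar>incr m j \<omega>\<bar>}"
    then obtain j where "\<omega> \<in> space M" "j \<in> {m<..n}" "e \<le> \<bar>incr m j \<omega>\<bar>" by blast
    from exists_first_exit[OF this] show "\<omega> \<in> (\<Union>j\<in>{m<..n}. ?A j)" by blast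
  qed
  hence "prob {\<omega>\<in>space M. \<exists>j\<in>{m<..n}. e \<le> \<bar>incr m j \<omega>\<bar>} \<le> prob (\<Union>j\<in>{m<..n}. ?A j)"
    using first_exit_sets_M by (intro finite_measure_mono) auto
  also have "\<dots> \<le> (\<Sum>j\<in>{m<..n}. prob (?A j))"
    using first_exit_sets_M by (intro finite_measure_subadditive_finite) auto
  finally have "prob {\<omega>\<in>space M. \<exists>j\<in>{m<..n}. e \<le> \<bar>incr m j \<omega>\<bar>} \<le> (\<Sum>j\<in>{m<..n}. prob (?A j))" .
  hence "e\<^sup>2 * prob {\<omega>\<in>space M. \<exists>j\<in>{m<..n}. e \<le> \<bar>incr m j \<omega>\<bar>} \<le> (\<Sum>j\<in>{m<..n}. e\<^sup>2 * prob (?A j))"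
    by (simp add: mult_left_mono sum_distrib_left[symmetric])
  also have "\<dots> \<le> (\<Sum>j\<in>{m<..n}. \<integral>\<omega>. indicator (?A j) \<omega> * (incr m n \<omega>)\<^sup>2 \<partial>M)"
    using sq_prob_first_exit_le[OF \<open>0 \<le> e\<close>] by (intro sum_mono) auto
  also have "\<dots> = (\<integral>\<omega>. (\<Sum>j\<in>{m<..n}. indicator (?A j) \<omega>) * (incr m n \<omega>)\<^sup>2 \<partial>M)"
    unfolding sum_distrib_right
      using indicator_integrable by (rule Bochner_Integration.integral_sum[symmetric])
  also have "\<dots> \<le> (\<integral>\<omega>. (incr m n \<omega>)\<^sup>2 \<partial>M)"
  proof (rule integral_mono)
    show "integrable M (\<lambda>\<omega>. (\<Sum>j\<in>{m<..n}. indicator (?A j) \<omega>) * (incr m n \<omega>)\<^sup>2)"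
      unfolding sum_distrib_right
        using indicator_integrable by (intro Bochner_Integration.integrable_sum)
    fix \<omega> show "(\<Sum>j\<in>{m<..n}. indicator (?A j) \<omega>) * (incr m n \<omega>)\<^sup>2 \<le> (incr m n \<omega>)\<^sup>2"
      using sum_indicator_first_exit_le_1 by (simp add: mult_left_le_one_le sum_nonneg)
  qed (rule incr_sq_integrable)
  also have "\<dots> = (\<Sum>k\<in>{m..<n}. \<integral>\<omega>. (d k \<omega>)\<^sup>2 \<partial>M)" by (rule integral_incr_sq[OF \<open>m \<le> n\<close>])
  finally show ?thesis .
qed

lemma incr_eq_partial_sums_diff: "m \<le> j \<Longrightarrow> incr m j \<omega> = (\<Sum>k<j. d k \<omega>) - (\<Sum>k<m. d k \<omega>)"
  unfolding incr_def atLeast0LessThan[symmetric]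
  by (simp add: sum.atLeastLessThan_concat[symmetric, of 0 m j])

lemma kolmogorov_tail_ineq:
  assumes summable: "summable (\<lambda>k. \<integral>\<omega>. (d k \<omega>)\<^sup>2 \<partial>M)" and e: "0 < e"
  shows "e\<^sup>2 * prob {\<omega>\<in>space M. \<exists>j. m < j \<and> e \<le> \<bar>incr m j \<omega>\<bar>}
    \<le> (\<Sum>k. \<integral>\<omega>. (d (k + m) \<omega>)\<^sup>2 \<partial>M)"
proof -
  define B where "B n = {\<omega>\<in>space M. \<exists>j\<in>{m<..m+n}. e \<le> \<bar>incr m j \<omega>\<bar>}" for n
  have "B n \<in> sets M" for n unfolding B_def by measurable
  hence B_sets: "range B \<subseteq> sets M" by auto
  have B_incseq: "incseq B"
  proof (rule incseq_SucI, rule subsetI)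
    fix n \<omega> assume "\<omega> \<in> B n"
    then obtain j where j: "\<omega> \<in> space M" "j \<in> {m<..m+n}" "e \<le> \<bar>incr m j \<omega>\<bar>" unfolding B_def by auto
    show "\<omega> \<in> B (Suc n)" unfolding B_def using j by (intro CollectI conjI bexI[of _ j]) auto
  qed
  have B_Union: "(\<Union>n. B n) = {\<omega>\<in>space M. \<exists>j. m < j \<and> e \<le> \<bar>incr m j \<omega>\<bar>}"
  proof (rule set_eqI, rule iffI)
    fix \<omega> assume "\<omega> \<in> (\<Union>n. B n)"
    then obtain n j where j: "\<omega> \<in> space M" "j \<in> {m<..m+n}" "e \<le> \<bar>incr m j \<omega>\<bar>" unfolding B_def by auto
    thus "\<omega> \<in> {\<omega>\<in>space M. \<exists>j. m < j \<and> e \<le> \<bar>incr m j \<omega>\<bar>}" by auto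
  next
    fix \<omega> assume "\<omega> \<in> {\<omega>\<in>space M. \<exists>j. m < j \<and> e \<le> \<bar>incr m j \<omega>\<bar>}"
    then obtain j where j: "\<omega> \<in> space M" "m < j" "e \<le> \<bar>incr m j \<omega>\<bar>" by auto
    hence "\<omega> \<in> B (j - m)" unfolding B_def by (intro CollectI conjI bexI[of _ j]) auto
    thus "\<omega> \<in> (\<Union>n. B n)" by blast
  qed
  have B_limit: "(\<lambda>n. e\<^sup>2 * prob (B n)) \<longlonglongrightarrow> e\<^sup>2 * prob (\<Union>n. B n)"
    by (intro tendsto_mult tendsto_const finite_Lim_measure_incseq B_sets B_incseq)
  have d_sq_nonneg: "\<And>k. 0 \<le> (\<integral>\<omega>. (d k \<omega>)\<^sup>2 \<partial>M)" by (rule integral_nonneg_AE) simp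
  have B_bound: "e\<^sup>2 * prob (B n) \<le> (\<Sum>k. \<integral>\<omega>. (d (k + m) \<omega>)\<^sup>2 \<partial>M)" for n
  proof -
    have "e\<^sup>2 * prob (B n) \<le> (\<Sum>k\<in>{m..<m+n}. \<integral>\<omega>. (d k \<omega>)\<^sup>2 \<partial>M)"
      unfolding B_def by (rule kolmogorov_maximal_ineq[OF less_imp_le[OF e]]) simp
    also have "\<dots> = (\<Sum>i<n. \<integral>\<omega>. (d (i + m) \<omega>)\<^sup>2 \<partial>M)"
      using sum.shift_bounds_nat_ivl[of "\<lambda>k. \<integral>\<omega>. (d k \<omega>)\<^sup>2 \<partial>M" 0 m n]
      by (simp add: add.commute atLeast0LessThan)
    also have "\<dots> \<le> (\<Sum>k. \<integral>\<omega>. (d (k + m) \<omega>)\<^sup>2 \<partial>M)"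
      by (rule sum_le_suminf) (auto intro: summable_ignore_initial_segment[OF summable] d_sq_nonneg)
    finally show ?thesis .
  qed
  have "e\<^sup>2 * prob (\<Union>n. B n) \<le> (\<Sum>k. \<integral>\<omega>. (d (k + m) \<omega>)\<^sup>2 \<partial>M)"
    by (rule LIMSEQ_le_const2[OF B_limit]) (use B_bound in auto)
  thus ?thesis unfolding B_Union .
qed

lemma AE_eventually_small_increments:
  assumes summable: "summable (\<lambda>k. \<integral>\<omega>. (d k \<omega>)\<^sup>2 \<partial>M)" and "0 < e"
  shows "AE \<omega> in M. \<exists>m. \<forall>j>m. \<bar>incr m j \<omega>\<bar> < e"
proof -
  define Bad where "Bad = {\<omega>\<in>space M. \<forall>m. \<exists>j>m. e \<le> \<bar>incr m j \<omega>\<bar>}"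
  have Bad_sets: "Bad \<in> sets M" unfolding Bad_def by measurable
  have "e\<^sup>2 * prob Bad \<le> \<delta>" if \<delta>: "0 < \<delta>" for \<delta>
  proof -
    obtain m where m: "norm (\<Sum>k. \<integral>\<omega>. (d (k + m) \<omega>)\<^sup>2 \<partial>M) < \<delta>"
      using suminf_exist_split[OF \<delta> summable] by blast
    have "Bad \<subseteq> {\<omega>\<in>space M. \<exists>j. m < j \<and> e \<le> \<bar>incr m j \<omega>\<bar>}" unfolding Bad_def by auto
    hence "prob Bad \<le> prob {\<omega>\<in>space M. \<exists>j. m < j \<and> e \<le> \<bar>incr m j \<omega>\<bar>}"
      by (rule finite_measure_mono) measurable
    hence "e\<^sup>2 * prob Bad \<le> e\<^sup>2 * prob {\<omega>\<in>space M. \<exists>j. m < j \<and> e \<le> \<bar>incr m j \<omega>\<bar>}"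
      by (simp add: mult_left_mono)
    also have "\<dots> \<le> (\<Sum>k. \<integral>\<omega>. (d (k + m) \<omega>)\<^sup>2 \<partial>M)" by (rule kolmogorov_tail_ineq[OF summable \<open>0 < e\<close>])
    also have "\<dots> < \<delta>" using m by simp
    finally show ?thesis by simp
  qed
  hence "e\<^sup>2 * prob Bad \<le> 0" by (rule field_le_epsilon) simp
  hence "prob Bad = 0" using \<open>0 < e\<close> measure_nonneg[of M Bad] by (simp add: mult_le_0_iff)
  hence "Bad \<in> null_sets M" using Bad_sets by (simp add: null_sets_def emeasure_eq_measure)
  thus ?thesis by (rule AE_I') (auto simp: Bad_def not_less)
qed

lemma AE_partial_sums_convergent:
  assumes summable: "summable (\<lambda>k. \<integral>\<omega>. (d k \<omega>)\<^sup>2 \<partial>M)"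
  shows "AE \<omega> in M. convergent (\<lambda>n. \<Sum>k<n. d k \<omega>)"
proof -
  have "AE \<omega> in M. \<forall>r. \<exists>m. \<forall>j>m. \<bar>incr m j \<omega>\<bar> < 1 / real (Suc r)"
    by (simp add: AE_all_countable AE_eventually_small_increments[OF summable])
  thus ?thesis
  proof eventually_elim
    case (elim \<omega>)
    have "\<exists>m. \<forall>j\<ge>m. dist (\<Sum>k<j. d k \<omega>) (\<Sum>k<m. d k \<omega>) < e" if e: "0 < e" for e
    proof -
      obtain r where r: "1 / real (Suc r) < e"
        using reals_Archimedean[OF e] by (auto simp: inverse_eq_divide)
      obtain m where m: "\<forall>j>m. \<bar>incr m j \<omega>\<bar> < 1 / real (Suc r)" using elim by blast
      have "dist (\<Sum>k<j. d k \<omega>) (\<Sum>k<m. d k \<omega>) < e" if "m \<le> j" for j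
      proof (cases "m = j")
        case False
        hence "\<bar>incr m j \<omega>\<bar> < 1 / real (Suc r)" using m \<open>m \<le> j\<close> by simp
        thus ?thesis using r incr_eq_partial_sums_diff[OF \<open>m \<le> j\<close>] by (simp add: dist_real_def)
      qed (simp add: e)
      thus ?thesis by blast
    qed
    hence "Cauchy (\<lambda>n. \<Sum>k<n. d k \<omega>)" unfolding Cauchy_altdef2 by blast
    thus ?case by (simp add: Cauchy_convergent_iff)
  qed
qed

end

lemma AE_summable_if_summable_integral:
  fixes h :: "nat \<Rightarrow> 'a \<Rightarrow> real"
  assumes hm: "\<And>k. h k \<in> borel_measurable M" and h0: "\<And>k \<omega>. h k \<omega> \<ge> 0"
    and hi: "\<And>k. integrable M (h k)" and sm: "summable (\<lambda>k. \<integral>\<omega>. h k \<omega> \<partial>M)"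
  shows "AE \<omega> in M. summable (\<lambda>k. h k \<omega>)"
proof -
  have "(\<integral>\<^sup>+ \<omega>. (\<Sum>k. ennreal (h k \<omega>)) \<partial>M) = (\<Sum>k. \<integral>\<^sup>+ \<omega>. ennreal (h k \<omega>) \<partial>M)"
    by (rule nn_integral_suminf) (use hm in measurable)
  also have "\<dots> = (\<Sum>k. ennreal (\<integral>\<omega>. h k \<omega> \<partial>M))"
    using hi h0 by (subst nn_integral_eq_integral) auto
  also have "\<dots> = ennreal (\<Sum>k. \<integral>\<omega>. h k \<omega> \<partial>M)"
    by (rule suminf_ennreal_eq) (auto intro: integral_nonneg_AE h0 summable_sums[OF sm])
  finally have "(\<integral>\<^sup>+ \<omega>. (\<Sum>k. ennreal (h k \<omega>)) \<partial>M) \<noteq> \<infinity>" by simp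
  hence "AE \<omega> in M. (\<Sum>k. ennreal (h k \<omega>)) \<noteq> \<infinity>"
    by (intro nn_integral_PInf_AE) (use hm in measurable)
  thus ?thesis by eventually_elim (rule summable_suminf_not_top[OF h0], simp)
qed

lemma (in sigma_finite_subalgebra) integral_mult_eq_0_if_real_cond_exp_eq_0:
  assumes "integrable M (\<lambda>x. f x * g x)" "f \<in> borel_measurable F" "g \<in> borel_measurable M"
    and "AE x in M. real_cond_exp M F g x = 0"
  shows "(\<integral>x. f x * g x \<partial>M) = 0"
proof -
  have [measurable]: "f \<in> borel_measurable M" by (rule measurable_from_subalg[OF subalg assms(2)])
  have "(\<integral>x. f x * g x \<partial>M) = (\<integral>x. f x * real_cond_exp M F g x \<partial>M)"
    using real_cond_exp_intg(2)[OF assms(1-3)] by simp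
  also have "\<dots> = (\<integral>x. 0 \<partial>M)" by (rule integral_cong_AE) (use assms(4) in auto)
  finally show ?thesis by simp
qed

lemma (in prob_space) sigma_finite_subalgebra_if_subalgebra:
  "subalgebra M F \<Longrightarrow> sigma_finite_subalgebra M F"
  by (intro finite_measure_subalgebra_is_sigma_finite finite_measure_subalgebra.intro
      finite_measure_subalgebra_axioms.intro) unfold_locales

lemma continuous_on_if_norm_lipschitz:
  assumes "\<And>y u. y \<in> X \<Longrightarrow> u \<in> X \<Longrightarrow> norm (g y - g u) \<le> L * norm (y - u)" "0 \<le> L"
  shows "continuous_on X g"
proof (rule lipschitz_on_continuous_on)
  show "L-lipschitz_on X g" using assms by (intro lipschitz_onI) (auto simp: dist_norm)
qed

section \<open>Almost sure convergence of projected stochastic gradient descent\<close>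

text \<open>The Robbins--Monro conditions on the steps are all that the convergence argument needs.\<close>
locale projected_sgd = filtered_prob_space +
  fixes X :: "'v::euclidean_space set"
    and f :: "'v \<Rightarrow> real" and gradf :: "'v \<Rightarrow> 'v" and L eta nu :: real
    and step :: "nat \<Rightarrow> real" and x w :: "nat \<Rightarrow> 'a \<Rightarrow> 'v"
  assumes compact: "compact X" and convex: "convex X" and nonempty: "X \<noteq> {}"
    and f_deriv: "\<And>y. y \<in> X \<Longrightarrow> (f has_derivative (\<lambda>h. gradf y \<bullet> h)) (at y)"
    and gradf_lipschitz: "\<And>y u. y \<in> X \<Longrightarrow> u \<in> X \<Longrightarrow> norm (gradf y - gradf u) \<le> L * norm (y - u)"
    and L_nonneg: "0 \<le> L" and eta_pos: "0 < eta" and strongly_convex: "strongly_convex_on X eta f"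
    and step_pos: "\<And>k. 0 < step k" and step_not_summable: "\<not> summable step"
    and step_sq_summable: "summable (\<lambda>k. (step k)\<^sup>2)"
    and x_adapted: "\<And>k. x k \<in> borel_measurable (Fk k)"
    and x_in_X: "\<And>k \<omega>. \<omega> \<in> space M \<Longrightarrow> x k \<omega> \<in> X"
    and x_Suc: "\<And>k \<omega>. x (Suc k) \<omega> = closest_point X (x k \<omega> - step k *\<^sub>R (gradf (x k \<omega>) + w k \<omega>))"
    and w_adapted: "\<And>k. w k \<in> borel_measurable (Fk (Suc k))"
    and w_unbiased: "\<And>k i. i \<in> Basis \<Longrightarrow> AE \<omega> in M. real_cond_exp M (Fk k) (\<lambda>\<omega>. w k \<omega> \<bullet> i) \<omega> = 0"
    and w_sq_integrable: "\<And>k. integrable M (\<lambda>\<omega>. (norm (w k \<omega>))\<^sup>2)"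
    and w_variance: "\<And>k. AE \<omega> in M. real_cond_exp M (Fk k) (\<lambda>\<omega>. (norm (w k \<omega>))\<^sup>2) \<omega> \<le> nu\<^sup>2"
begin

lemma w_measurable[measurable]: "w k \<in> borel_measurable M"
  by (rule measurable_from_filtration[OF w_adapted])

lemma continuous_on_gradf: "continuous_on X gradf"
  using gradf_lipschitz L_nonneg by (rule continuous_on_if_norm_lipschitz)

lemma gradf_adapted: "(\<lambda>\<omega>. gradf (x k \<omega>)) \<in> borel_measurable (Fk k)"
proof -
  have "x k \<in> measurable (Fk k) (restrict_space borel X)"
    using x_adapted x_in_X subalgebra[of k]
    by (intro measurable_restrict_space2) (auto simp: subalgebra_def)
  from measurable_comp[OF this borel_measurable_continuous_on_restrict[OF continuous_on_gradf]]
  show ?thesis by (simp add: comp_def)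
qed

definition xopt :: 'v where "xopt = (THE xs. xs \<in> X \<and> (\<forall>y\<in>X. f xs \<le> f y))"

lemma xopt_unique: "\<exists>!xs. xs \<in> X \<and> (\<forall>y\<in>X. f xs \<le> f y)"
  using compact convex nonempty eta_pos strongly_convex f_deriv
  by (intro strongly_convex_on_unique_minimizer continuous_at_imp_continuous_on)
    (auto dest: has_derivative_continuous)

lemma xopt: "xopt \<in> X" "\<And>y. y \<in> X \<Longrightarrow> f xopt \<le> f y"
  using theI'[OF xopt_unique] unfolding xopt_def[symmetric] by auto

lemma closest_point_step_xopt: "closest_point X (xopt - step k *\<^sub>R gradf xopt) = xopt"
proof (rule closest_point_step_at_minimizer[OF convex compact_imp_closed[OF compact] xopt(1)])
  show "\<forall>y\<in>X. 0 \<le> gradf xopt \<bullet> (y - xopt)"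
    using minimizer_gradient_nonneg[where f = f and gradf = gradf, OF convex xopt(1)] xopt f_deriv by blast
qed (use step_pos[of k] in simp)

lemma dist_xopt_le_diameter: "\<omega> \<in> space M \<Longrightarrow> norm (x k \<omega> - xopt) \<le> diameter X"
  using diameter_bounded_bound[OF compact_imp_bounded[OF compact] x_in_X xopt(1)]
  by (simp add: dist_norm)

lemma step_bounded: obtains C where "0 \<le> C" "\<And>k. step k \<le> C"
proof -
  have "(\<lambda>k. sqrt ((step k)\<^sup>2)) \<longlonglongrightarrow> sqrt 0"
    by (intro tendsto_real_sqrt summable_LIMSEQ_zero step_sq_summable)
  moreover have "(\<lambda>k. sqrt ((step k)\<^sup>2)) = step" using step_pos by (simp add: fun_eq_iff less_imp_le)
  ultimately have "Bseq step" by (metis convergentI convergent_imp_Bseq)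
  then obtain C where "0 < C" "\<And>k. norm (step k) \<le> C" by (auto elim: BseqE)
  thus ?thesis using that[of C] by (simp add: abs_le_iff)
qed

text \<open>The noise enters the squared distance to the optimum only through \<open>step k * (w k \<bullet> u k)\<close>;
  since \<open>u k\<close> is \<open>Fk k\<close>-measurable, these terms are martingale differences.\<close>
definition u :: "nat \<Rightarrow> 'a \<Rightarrow> 'v" where
  "u k \<omega> = x k \<omega> - xopt - step k *\<^sub>R (gradf (x k \<omega>) - gradf xopt)"

definition noise_term :: "nat \<Rightarrow> 'a \<Rightarrow> real" where
  "noise_term k \<omega> = step k * (w k \<omega> \<bullet> u k \<omega>)"

lemma u_adapted: "u k \<in> borel_measurable (Fk k)"
  using x_adapted[of k] gradf_adapted[of k] unfolding u_def by measurable

lemma noise_term_adapted: "noise_term k \<in> borel_measurable (Fk (Suc k))"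
  using w_adapted[of k] measurable_filtration_mono[OF _ u_adapted, of k "Suc k"]
  unfolding noise_term_def by measurable

lemma noise_term_measurable[measurable]: "noise_term k \<in> borel_measurable M"
  by (rule measurable_from_filtration[OF noise_term_adapted])

lemma u_bounded: obtains C where "0 \<le> C" "\<And>k \<omega>. \<omega> \<in> space M \<Longrightarrow> norm (u k \<omega>) \<le> C"
proof -
  obtain S where S: "0 \<le> S" "\<And>k. step k \<le> S" using step_bounded by blast
  have "norm (u k \<omega>) \<le> diameter X + S * (L * diameter X)" if \<omega>: "\<omega> \<in> space M" for k \<omega>
  proof -
    have "norm (u k \<omega>) \<le> norm (x k \<omega> - xopt) + step k * norm (gradf (x k \<omega>) - gradf xopt)"
      unfolding u_def
      using norm_triangle_ineq4[of "x k \<omega> - xopt" "step k *\<^sub>R (gradf (x k \<omega>) - gradf xopt)"] step_pos[of k]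
      by (simp add: abs_of_pos)
    moreover have "norm (gradf (x k \<omega>) - gradf xopt) \<le> L * diameter X"
      using gradf_lipschitz[OF x_in_X[OF \<omega>] xopt(1)] dist_xopt_le_diameter[OF \<omega>] L_nonneg
      by (meson mult_left_mono order_trans)
    hence "step k * norm (gradf (x k \<omega>) - gradf xopt) \<le> S * (L * diameter X)"
      using S step_pos[of k] by (intro mult_mono) auto
    ultimately show ?thesis using dist_xopt_le_diameter[OF \<omega>, of k] by linarith
  qed
  moreover have "0 \<le> diameter X + S * (L * diameter X)"
    using diameter_ge_0[OF compact_imp_bounded[OF compact]] S(1) L_nonneg by simp
  ultimately show ?thesis using that by blast
qed

lemma sq_dist_xopt_Suc_le:
  assumes "\<omega> \<in> space M"
  shows "(norm (x (Suc k) \<omega> - xopt))\<^sup>2 \<le> (norm (x k \<omega> - xopt))\<^sup>2 - 2 * eta * step k * (norm (x k \<omega> - xopt))\<^sup>2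
     + (step k)\<^sup>2 * L\<^sup>2 * (norm (x k \<omega> - xopt))\<^sup>2 + (step k)\<^sup>2 * (norm (w k \<omega>))\<^sup>2 - 2 * noise_term k \<omega>"
proof -
  have xk: "x k \<omega> \<in> X" by (rule x_in_X[OF assms])
  have "eta * (norm (x k \<omega> - xopt))\<^sup>2 \<le> (gradf (x k \<omega>) - gradf xopt) \<bullet> (x k \<omega> - xopt)"
    using strongly_convex_on_gradient_monotone[OF strongly_convex xopt(1) xk] f_deriv xk xopt(1) by blast
  from closest_point_step_sq_dist_le[OF convex compact_imp_closed[OF compact] nonempty xopt(1)
      closest_point_step_xopt[of k] this gradf_lipschitz[OF xk xopt(1)] L_nonneg less_imp_le[OF step_pos],
      of "w k \<omega>"]
  show ?thesis unfolding x_Suc noise_term_def u_def by (simp add: mult.assoc)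
qed

lemma integral_norm_w_sq_le: "(\<integral>\<omega>. (norm (w k \<omega>))\<^sup>2 \<partial>M) \<le> nu\<^sup>2"
proof -
  interpret sigma_finite_subalgebra M "Fk k"
    by (rule sigma_finite_subalgebra_if_subalgebra[OF subalgebra])
  have "(\<integral>\<omega>. (norm (w k \<omega>))\<^sup>2 \<partial>M) = (\<integral>\<omega>. real_cond_exp M (Fk k) (\<lambda>\<omega>. (norm (w k \<omega>))\<^sup>2) \<omega> \<partial>M)"
    using real_cond_exp_int(2)[OF w_sq_integrable] by simp
  also have "\<dots> \<le> (\<integral>\<omega>. nu\<^sup>2 \<partial>M)"
    using real_cond_exp_int(1)[OF w_sq_integrable] w_variance by (intro integral_mono_AE) auto
  finally show ?thesis by (simp add: prob_space)
qed

lemma noise_term_sq_le: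
  obtains C where "\<And>k \<omega>. \<omega> \<in> space M \<Longrightarrow> (noise_term k \<omega>)\<^sup>2 \<le> (step k)\<^sup>2 * C\<^sup>2 * (norm (w k \<omega>))\<^sup>2"
proof -
  obtain C where C: "0 \<le> C" "\<And>k \<omega>. \<omega> \<in> space M \<Longrightarrow> norm (u k \<omega>) \<le> C" using u_bounded by blast
  have "(noise_term k \<omega>)\<^sup>2 \<le> (step k)\<^sup>2 * C\<^sup>2 * (norm (w k \<omega>))\<^sup>2" if "\<omega> \<in> space M" for k \<omega>
  proof -
    have "\<bar>w k \<omega> \<bullet> u k \<omega>\<bar> \<le> norm (w k \<omega>) * C"
      using Cauchy_Schwarz_ineq2[of "w k \<omega>" "u k \<omega>"] C(2)[OF that, of k]
      by (meson order_trans mult_left_mono norm_ge_zero)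
    hence "(w k \<omega> \<bullet> u k \<omega>)\<^sup>2 \<le> (norm (w k \<omega>) * C)\<^sup>2"
      by (metis abs_ge_zero order_trans power2_abs power_mono)
    from mult_left_mono[OF this, of "(step k)\<^sup>2"] show ?thesis
      unfolding noise_term_def by (simp add: power_mult_distrib algebra_simps)
  qed
  thus ?thesis using that by blast
qed

lemma noise_term_sq_integrable: "integrable M (\<lambda>\<omega>. (noise_term k \<omega>)\<^sup>2)"
proof -
  obtain C where C: "\<And>k \<omega>. \<omega> \<in> space M \<Longrightarrow> (noise_term k \<omega>)\<^sup>2 \<le> (step k)\<^sup>2 * C\<^sup>2 * (norm (w k \<omega>))\<^sup>2"
    using noise_term_sq_le by blast
  show ?thesis
  proof (rule Bochner_Integration.integrable_bound)
    show "integrable M (\<lambda>\<omega>. (step k)\<^sup>2 * C\<^sup>2 * (norm (w k \<omega>))\<^sup>2)" using w_sq_integrable by simp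
  qed (use C in auto)
qed

text \<open>Orthogonality is checked coordinatewise, where it is the unbiasedness of \<open>w k\<close>.\<close>
lemma noise_term_orthogonal:
  assumes g: "g \<in> borel_measurable (Fk k)" and g_sq: "integrable M (\<lambda>\<omega>. (g \<omega>)\<^sup>2)"
  shows "(\<integral>\<omega>. g \<omega> * noise_term k \<omega> \<partial>M) = 0"
proof -
  interpret sigma_finite_subalgebra M "Fk k"
    by (rule sigma_finite_subalgebra_if_subalgebra[OF subalgebra])
  have [measurable]: "g \<in> borel_measurable M" by (rule measurable_from_filtration[OF g])
  define a where "a i \<omega> = g \<omega> * step k * (u k \<omega> \<bullet> i)" for i \<omega>
  obtain C where C: "0 \<le> C" "\<And>k \<omega>. \<omega> \<in> space M \<Longrightarrow> norm (u k \<omega>) \<le> C" using u_bounded by blast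
  have a_adapted: "a i \<in> borel_measurable (Fk k)" for i
    using g u_adapted[of k] unfolding a_def by measurable
  have [measurable]: "a i \<in> borel_measurable M" for i by (rule measurable_from_filtration[OF a_adapted])
  have a_sq: "integrable M (\<lambda>\<omega>. (a i \<omega>)\<^sup>2)" if i: "i \<in> Basis" for i
  proof (rule Bochner_Integration.integrable_bound)
    show "integrable M (\<lambda>\<omega>. (step k)\<^sup>2 * C\<^sup>2 * (g \<omega>)\<^sup>2)" using g_sq by simp
    have "(a i \<omega>)\<^sup>2 \<le> (step k)\<^sup>2 * C\<^sup>2 * (g \<omega>)\<^sup>2" if "\<omega> \<in> space M" for \<omega>
    proof -
      have "(u k \<omega> \<bullet> i)\<^sup>2 \<le> C\<^sup>2"
        using Basis_le_norm[OF i, of "u k \<omega>"] C(2)[OF that, of k]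
        by (metis abs_ge_zero inner_commute order_trans power2_abs power_mono)
      from mult_left_mono[OF this, of "(step k)\<^sup>2 * (g \<omega>)\<^sup>2"] show ?thesis
        unfolding a_def by (simp add: power_mult_distrib algebra_simps)
    qed
    thus "AE \<omega> in M. norm ((a i \<omega>)\<^sup>2) \<le> norm ((step k)\<^sup>2 * C\<^sup>2 * (g \<omega>)\<^sup>2)" by (intro AE_I2) simp
  qed measurable
  have products_integrable: "integrable M (\<lambda>\<omega>. a i \<omega> * (w k \<omega> \<bullet> i))" if "i \<in> Basis" for i
    using a_sq[OF that] inner_sq_integrable[OF w_sq_integrable w_measurable that]
    by (intro integrable_mult_if_square_integrable) auto
  have "(\<integral>\<omega>. g \<omega> * noise_term k \<omega> \<partial>M) = (\<integral>\<omega>. (\<Sum>i\<in>Basis. a i \<omega> * (w k \<omega> \<bullet> i)) \<partial>M)"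
  proof (rule Bochner_Integration.integral_cong[OF refl])
    fix \<omega>
    have "w k \<omega> \<bullet> u k \<omega> = (\<Sum>i\<in>Basis. (w k \<omega> \<bullet> i) * (u k \<omega> \<bullet> i))" by (rule euclidean_inner)
    thus "g \<omega> * noise_term k \<omega> = (\<Sum>i\<in>Basis. a i \<omega> * (w k \<omega> \<bullet> i))"
      unfolding noise_term_def a_def by (simp add: sum_distrib_left algebra_simps)
  qed
  also have "\<dots> = (\<Sum>i\<in>Basis. \<integral>\<omega>. a i \<omega> * (w k \<omega> \<bullet> i) \<partial>M)"
    by (rule Bochner_Integration.integral_sum) (rule products_integrable)
  also have "\<dots> = 0"
    using integral_mult_eq_0_if_real_cond_exp_eq_0[OF products_integrable a_adapted _ w_unbiased]
    by simp
  finally show ?thesis .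
qed

sublocale noise: sq_martingale_diff M Fk noise_term
  using noise_term_adapted noise_term_sq_integrable noise_term_orthogonal by unfold_locales

lemma summable_integral_noise_term_sq: "summable (\<lambda>k. \<integral>\<omega>. (noise_term k \<omega>)\<^sup>2 \<partial>M)"
proof -
  obtain C where C: "\<And>k \<omega>. \<omega> \<in> space M \<Longrightarrow> (noise_term k \<omega>)\<^sup>2 \<le> (step k)\<^sup>2 * C\<^sup>2 * (norm (w k \<omega>))\<^sup>2"
    using noise_term_sq_le by blast
  have "(\<integral>\<omega>. (noise_term k \<omega>)\<^sup>2 \<partial>M) \<le> (\<integral>\<omega>. (step k)\<^sup>2 * C\<^sup>2 * (norm (w k \<omega>))\<^sup>2 \<partial>M)" for k
    using C noise_term_sq_integrable w_sq_integrable by (intro integral_mono) auto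
  also have "(\<integral>\<omega>. (step k)\<^sup>2 * C\<^sup>2 * (norm (w k \<omega>))\<^sup>2 \<partial>M) \<le> (step k)\<^sup>2 * (C\<^sup>2 * nu\<^sup>2)" for k
    using mult_left_mono[OF integral_norm_w_sq_le[of k], of "(step k)\<^sup>2 * C\<^sup>2"] by (simp add: mult.assoc)
  finally show ?thesis
    by (intro summable_comparison_test'[OF summable_mult2[OF step_sq_summable]])
      (simp add: integral_nonneg_AE)
qed

lemma AE_summable_step_sq_norm_w_sq: "AE \<omega> in M. summable (\<lambda>k. (step k)\<^sup>2 * (norm (w k \<omega>))\<^sup>2)"
proof (rule AE_summable_if_summable_integral)
  have "(\<integral>\<omega>. (step k)\<^sup>2 * (norm (w k \<omega>))\<^sup>2 \<partial>M) \<le> (step k)\<^sup>2 * nu\<^sup>2" for k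
    using integral_norm_w_sq_le[of k] by (simp add: mult_left_mono)
  thus "summable (\<lambda>k. \<integral>\<omega>. (step k)\<^sup>2 * (norm (w k \<omega>))\<^sup>2 \<partial>M)"
    by (intro summable_comparison_test'[OF summable_mult2[OF step_sq_summable]])
      (simp add: integral_nonneg_AE)
qed (use w_sq_integrable in simp_all)

text \<open>Along every path where the noise martingale converges and \<open>\<Sum> \<gamma>\<^sub>k\<^sup>2 \<parallel>w\<^sub>k\<parallel>\<^sup>2 < \<infinity>\<close>, the
  squared distance to the optimum satisfies the deterministic perturbed descent recursion.\<close>
theorem AE_tendsto_xopt: "AE \<omega> in M. (\<lambda>k. x k \<omega>) \<longlonglongrightarrow> xopt"
  using AE_space noise.AE_partial_sums_convergent[OF summable_integral_noise_term_sq]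
    AE_summable_step_sq_norm_w_sq
proof eventually_elim
  case (elim \<omega>)
  define V where "V k = (norm (x k \<omega> - xopt))\<^sup>2" for k
  define b where "b k = (step k)\<^sup>2 * (L\<^sup>2 * (diameter X)\<^sup>2) + (step k)\<^sup>2 * (norm (w k \<omega>))\<^sup>2" for k
  define S where "S n = 2 * (\<Sum>k<n. noise_term k \<omega>)" for n
  have "V (Suc k) \<le> V k - (2 * eta) * step k * V k + b k - (S (Suc k) - S k)" for k
  proof -
    have "(step k)\<^sup>2 * L\<^sup>2 * V k \<le> (step k)\<^sup>2 * (L\<^sup>2 * (diameter X)\<^sup>2)"
      using dist_xopt_le_diameter[OF elim(1), of k] unfolding V_def
      by (simp add: mult_left_mono power_mono mult.assoc)
    thus ?thesis using sq_dist_xopt_Suc_le[OF elim(1), of k] by (simp add: V_def b_def S_def)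
  qed
  moreover have "summable b"
    unfolding b_def by (intro summable_add summable_mult2 step_sq_summable elim(3))
  moreover have "convergent S"
    using elim(2) convergent_mult_const_iff[of 2 "\<lambda>n. \<Sum>k<n. noise_term k \<omega>"]
    unfolding S_def[abs_def] by simp
  ultimately have "V \<longlonglongrightarrow> 0"
    using eta_pos step_pos step_not_summable
    by (intro perturbed_descent_tendsto_zero[of V step "2 * eta" b S]) (auto simp: V_def b_def less_imp_le)
  hence "(\<lambda>k. norm (x k \<omega> - xopt)) \<longlonglongrightarrow> 0"
    using tendsto_real_sqrt[of V 0 sequentially] by (simp add: V_def)
  thus ?case by (simp add: tendsto_norm_zero_iff LIM_zero_iff)
qed

end

section \<open>Adaptedness of the iterates\<close>

lemma sgd_iterates_adapted:
  fixes F :: "'v::euclidean_space \<Rightarrow> 'b \<Rightarrow> real" and G :: "'v \<Rightarrow> 'b \<Rightarrow> 'v"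
    and x w :: "nat \<Rightarrow> 'a \<Rightarrow> 'v" and xi :: "nat \<Rightarrow> 'a \<Rightarrow> 'b"
  assumes Dom: "open Dom" "X \<subseteq> Dom" and X: "closed X" "convex X" "X \<noteq> {}"
    and F_cont: "\<And>z. z \<in> space N \<Longrightarrow> continuous_on Dom (\<lambda>y. F y z)"
    and F_meas: "\<And>y. y \<in> Dom \<Longrightarrow> F y \<in> borel_measurable N"
    and F_deriv: "\<And>y z. y \<in> X \<Longrightarrow> z \<in> space N \<Longrightarrow> ((\<lambda>u. F u z) has_derivative (\<lambda>h. G y z \<bullet> h)) (at y)"
    and gradf_cont: "continuous_on X gradf"
    and xi_meas: "\<And>k. xi k \<in> measurable M N" and x0_meas: "x0 \<in> borel_measurable M"
    and x_in_X: "\<And>k \<omega>. \<omega> \<in> space M \<Longrightarrow> x k \<omega> \<in> X"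
    and x_0: "\<And>\<omega>. x 0 \<omega> = x0 \<omega>"
    and w_def: "\<And>k \<omega>. w k \<omega> = G (x k \<omega>) (xi k \<omega>) - gradf (x k \<omega>)"
    and x_Suc: "\<And>k \<omega>. x (Suc k) \<omega> = closest_point X (x k \<omega> - step k *\<^sub>R (gradf (x k \<omega>) + w k \<omega>))"
  shows "x k \<in> borel_measurable (nat_filtration M N x0 xi k)"
    and "w k \<in> borel_measurable (nat_filtration M N x0 xi (Suc k))"
proof -
  let ?F = "nat_filtration M N x0 xi"
  have stochastic_gradient:
    "(\<lambda>\<omega>. G (x k \<omega>) (xi k \<omega>)) \<in> borel_measurable (?F (Suc k))" if "x k \<in> borel_measurable (?F (Suc k))" for k
    using x_in_X
    by (intro gradient_measurable[OF Dom F_cont F_meas F_deriv that _ measurable_nat_filtration_noise[OF xi_meas]])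
      simp_all
  have gradient: "(\<lambda>\<omega>. gradf (x k \<omega>)) \<in> borel_measurable (?F j)" if "x k \<in> borel_measurable (?F j)" for k j
  proof -
    have "x k \<in> measurable (?F j) (restrict_space borel X)"
      using that x_in_X by (intro measurable_restrict_space2) auto
    from measurable_comp[OF this borel_measurable_continuous_on_restrict[OF gradf_cont]]
    show ?thesis by (simp add: comp_def)
  qed
  have x_adapted: "x k \<in> borel_measurable (?F k)" for k
  proof (induction k)
    case 0
    thus ?case using measurable_nat_filtration_initial[OF x0_meas] x_0 by (simp add: fun_eq_iff)
  next
    case (Suc k)
    hence xk[measurable]: "x k \<in> borel_measurable (?F (Suc k))"
      by (rule measurable_nat_filtration_mono[rotated]) simp
    have "(\<lambda>\<omega>. x k \<omega> - step k *\<^sub>R G (x k \<omega>) (xi k \<omega>)) \<in> borel_measurable (?F (Suc k))"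
      using stochastic_gradient[OF xk] by measurable
    from borel_measurable_continuous_on[OF continuous_on_closest_point[OF X(2,1,3)] this]
    show ?case by (simp add: x_Suc w_def)
  qed
  thus "x k \<in> borel_measurable (?F k)" .
  have "x k \<in> borel_measurable (?F (Suc k))"
    by (rule measurable_nat_filtration_mono[OF _ x_adapted]) simp
  hence "(\<lambda>\<omega>. G (x k \<omega>) (xi k \<omega>) - gradf (x k \<omega>)) \<in> borel_measurable (?F (Suc k))"
    using stochastic_gradient gradient by simp
  thus "w k \<in> borel_measurable (?F (Suc k))" by (simp add: w_def[abs_def])
qed

theorem proposition7:
  fixes M :: "'a measure" and N :: "'b measure"
    and F :: "'v::euclidean_space \<Rightarrow> 'b \<Rightarrow> real" and G :: "'v \<Rightarrow> 'b \<Rightarrow> 'v"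
    and f :: "'v \<Rightarrow> real" and gradf :: "'v \<Rightarrow> 'v"
    and Dom X :: "'v set"
    and xi :: "nat \<Rightarrow> 'a \<Rightarrow> 'b" and x0 :: "'a \<Rightarrow> 'v" and x :: "nat \<Rightarrow> 'a \<Rightarrow> 'v"
    and w :: "nat \<Rightarrow> 'a \<Rightarrow> 'v"
    and L eta nu gamma0 theta :: real
  assumes M: "prob_space M" and N: "prob_space N"
    and Dom: "open Dom" and XD: "X \<subseteq> Dom" and Xne: "X \<noteq> {}" and Xclosed: "closed X"
    and Xconvex: "convex X" and Xcompact: "compact X"
    and Fconv: "\<forall>z\<in>space N. convex_on Dom (\<lambda>y. F y z)"
    and Fint: "\<forall>y\<in>Dom. integrable N (F y)"
    and fdef: "\<forall>y\<in>Dom. f y = (\<integral>z. F y z \<partial>N)"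
    and Fgrad: "\<forall>y\<in>X. \<forall>z\<in>space N. ((\<lambda>u. F u z) has_derivative (\<lambda>h. G y z \<bullet> h)) (at y)"
    and fgrad: "\<forall>y\<in>X. (f has_derivative (\<lambda>h. gradf y \<bullet> h)) (at y)"
    and Lip: "\<forall>y\<in>X. \<forall>u\<in>X. norm (gradf y - gradf u) \<le> L * norm (y - u)"
    and eta: "eta > 0" and sconv: "strongly_convex_on X eta f" and Leta: "L > eta"
    and xi_meas: "\<forall>k. xi k \<in> measurable M N"
    and x0_meas: "x0 \<in> borel_measurable M" and x0X: "\<forall>\<omega>\<in>space M. x0 \<omega> \<in> X"
    and x_0: "\<forall>\<omega>. x 0 \<omega> = x0 \<omega>"
    and wdef: "\<forall>k \<omega>. w k \<omega> = G (x k \<omega>) (xi k \<omega>) - gradf (x k \<omega>)"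
    and x_Suc: "\<forall>k \<omega>. x (Suc k) \<omega> =
       closest_point X (x k \<omega> - casc_step eta L gamma0 theta nu (diameter X) k *\<^sub>R (gradf (x k \<omega>) + w k \<omega>))"
    and w_int: "\<forall>k. integrable M (w k)"
    and w_unbiased: "\<forall>k. \<forall>i\<in>Basis.
       AE \<omega> in M. real_cond_exp M (nat_filtration M N x0 xi k) (\<lambda>\<omega>. w k \<omega> \<bullet> i) \<omega> = 0"
    and w2_int: "\<forall>k. integrable M (\<lambda>\<omega>. (norm (w k \<omega>))\<^sup>2)"
    and w_var: "\<forall>k. AE \<omega> in M.
       real_cond_exp M (nat_filtration M N x0 xi k) (\<lambda>\<omega>. (norm (w k \<omega>))\<^sup>2) \<omega> \<le> nu\<^sup>2"
    and nu: "nu > 0"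
    and gamma0: "0 < gamma0" "gamma0 < 2 / L"
    and theta: "0 < theta" "theta < 1"
    and gamma0_D: "(diameter X)\<^sup>2 > gamma0\<^sup>2 * nu\<^sup>2 / (1 - qfun eta L gamma0)"
  shows "\<exists>xs. xs \<in> X \<and> (\<forall>y\<in>X. f xs \<le> f y) \<and>
              (\<forall>y\<in>X. (\<forall>u\<in>X. f y \<le> f u) \<longrightarrow> y = xs) \<and>
              (AE \<omega> in M. (\<lambda>k. x k \<omega>) \<longlonglongrightarrow> xs)"
proof -
  interpret cascade eta L gamma0 theta nu "diameter X"
    by unfold_locales (use eta Leta gamma0 theta nu gamma0_D in auto)
  have x_in_X: "x k \<omega> \<in> X" if "\<omega> \<in> space M" for k \<omega>
    using x0X x_0 x_Suc closest_point_in_set[OF Xclosed Xne] that by (cases k) auto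
  have gradf_cont: "continuous_on X gradf"
    using Lip eta Leta by (intro continuous_on_if_norm_lipschitz[of X gradf L]) auto
  have F_cont: "continuous_on Dom (\<lambda>y. F y z)" if "z \<in> space N" for z
    using Fconv that by (intro convex_on_continuous[OF Dom]) auto
  have F_meas: "F y \<in> borel_measurable N" if "y \<in> Dom" for y
    using Fint that by auto
  have F_deriv: "((\<lambda>u. F u z) has_derivative (\<lambda>h. G y z \<bullet> h)) (at y)" if "y \<in> X" "z \<in> space N" for y z
    using Fgrad that by auto
  note adapted = sgd_iterates_adapted[OF Dom XD Xclosed Xconvex Xne F_cont F_meas F_deriv gradf_cont _ x0_meas
      x_in_X x_0[rule_format] wdef[rule_format] x_Suc[rule_format]]
  interpret projected_sgd M "nat_filtration M N x0 xi" X f gradf L eta nu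
      "casc_step eta L gamma0 theta nu (diameter X)" x w
  proof (intro projected_sgd.intro filtered_prob_space.intro filtered_prob_space_axioms.intro
      projected_sgd_axioms.intro M)
    show "subalgebra M (nat_filtration M N x0 xi k)" for k
      using x0_meas xi_meas by (intro subalgebra_nat_filtration) auto
    show "x k \<in> borel_measurable (nat_filtration M N x0 xi k)"
      and "w k \<in> borel_measurable (nat_filtration M N x0 xi (Suc k))" for k
      using adapted xi_meas by blast+
    show "sets (nat_filtration M N x0 xi j) \<subseteq> sets (nat_filtration M N x0 xi k)" if "j \<le> k" for j k
      using that by (rule sets_nat_filtration_mono)
  qed (use Xcompact Xconvex Xne fgrad Lip eta Leta sconv casc_step_pos
      casc_step_not_summable casc_step_sq_summable x_in_X x_Suc w_unbiased w2_int w_var in auto)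
  show ?thesis using xopt xopt_unique AE_tendsto_xopt by blast
qed

end
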